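(* If $G$ is a non-abelian finite group, then $\mathrm{am}(\mathrm{ZL}^1(G))>1$.
   Context: $\mathrm{L}^1(G)$ is the convolution algebra of $G$ with normalised Haar measure $\int_G f=\frac1{|G|}\sum_{s\in G}f(s)$, and $\mathrm{ZL}^1(G)$ its centre. For a Banach algebra $\mathfrak{A}$, $\mathrm{am}(\mathfrak{A})$ is the infimum of $\sup_\alpha\|\mu_\alpha\|$ over bounded approximate diagonals, i.e. bounded nets $(\mu_\alpha)$ in $\mathfrak{A}\hat\otimes\mathfrak{A}$ with $m(\mu_\alpha)a\to a$, $a\,m(\mu_\alpha)\to a$, $a\cdot\mu_\alpha-\mu_\alpha\cdot a\to0$ for all $a$ ($m$ multiplication, $a\cdot(b\otimes c)=ab\otimes c$, $(b\otimes c)\cdot a=b\otimes ca$). *)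

theory Defs
  imports "HOL-Analysis.Analysis" "HOL-Algebra.Group"
begin

text \<open>Elements of L1(G) are functions on the carrier, taken to be zero outside it.
  Haar measure is normalised: the integral is (1/|G|) times the sum.\<close>

definition l1norm :: "('a, 'b) monoid_scheme \<Rightarrow> ('a \<Rightarrow> complex) \<Rightarrow> real" where
  "l1norm G f = (\<Sum>s\<in>carrier G. cmod (f s)) / real (card (carrier G))"

definition conv :: "('a, 'b) monoid_scheme \<Rightarrow> ('a \<Rightarrow> complex) \<Rightarrow> ('a \<Rightarrow> complex) \<Rightarrow> 'a \<Rightarrow> complex" where
  "conv G f g = (\<lambda>t. if t \<in> carrier G
      then (\<Sum>s\<in>carrier G. f s * g (inv\<^bsub>G\<^esub> s \<otimes>\<^bsub>G\<^esub> t)) / of_nat (card (carrier G))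
      else 0)"

text \<open>The centre ZL1(G): class functions.\<close>
definition ZL1 :: "('a, 'b) monoid_scheme \<Rightarrow> ('a \<Rightarrow> complex) set" where
  "ZL1 G = {f. (\<forall>x. x \<notin> carrier G \<longrightarrow> f x = 0) \<and>
      (\<forall>x\<in>carrier G. \<forall>y\<in>carrier G. f (y \<otimes>\<^bsub>G\<^esub> x \<otimes>\<^bsub>G\<^esub> inv\<^bsub>G\<^esub> y) = f x)}"

text \<open>Elements of ZL1(G) (x) ZL1(G) are represented as functions on G x G;
  a representation of F is a finite list of pairs (a_i, b_i) in ZL1 with F = sum a_i (x) b_i.\<close>
definition tens_reps :: "('a, 'b) monoid_scheme \<Rightarrow> ('a \<times> 'a \<Rightarrow> complex)
    \<Rightarrow> (('a \<Rightarrow> complex) \<times> ('a \<Rightarrow> complex)) list set" where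
  "tens_reps G F = {ps. set ps \<subseteq> ZL1 G \<times> ZL1 G \<and>
      (\<forall>x y. F (x, y) = sum_list (map (\<lambda>(a, b). a x * b y) ps))}"

definition ZL1_tens :: "('a, 'b) monoid_scheme \<Rightarrow> ('a \<times> 'a \<Rightarrow> complex) set" where
  "ZL1_tens G = {F. tens_reps G F \<noteq> {}}"

definition projnorm :: "('a, 'b) monoid_scheme \<Rightarrow> ('a \<times> 'a \<Rightarrow> complex) \<Rightarrow> real" where
  "projnorm G F = Inf {sum_list (map (\<lambda>(a, b). l1norm G a * l1norm G b) ps) | ps. ps \<in> tens_reps G F}"

text \<open>Multiplication map m(b (x) c) = b * c.\<close>
definition mtens :: "('a, 'b) monoid_scheme \<Rightarrow> ('a \<times> 'a \<Rightarrow> complex) \<Rightarrow> 'a \<Rightarrow> complex" where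
  "mtens G F = (\<lambda>t. if t \<in> carrier G
      then (\<Sum>s\<in>carrier G. F (s, inv\<^bsub>G\<^esub> s \<otimes>\<^bsub>G\<^esub> t)) / of_nat (card (carrier G))
      else 0)"

definition lact :: "('a, 'b) monoid_scheme \<Rightarrow> ('a \<Rightarrow> complex) \<Rightarrow> ('a \<times> 'a \<Rightarrow> complex) \<Rightarrow> 'a \<times> 'a \<Rightarrow> complex" where
  "lact G a F = (\<lambda>(x, y). conv G a (\<lambda>x'. F (x', y)) x)"

definition ract :: "('a, 'b) monoid_scheme \<Rightarrow> ('a \<times> 'a \<Rightarrow> complex) \<Rightarrow> ('a \<Rightarrow> complex) \<Rightarrow> 'a \<times> 'a \<Rightarrow> complex" where
  "ract G F a = (\<lambda>(x, y). conv G (\<lambda>y'. F (x, y')) a y)"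

text \<open>Bounded approximate diagonal with bound C: a net in ZL1 (x) ZL1, encoded as a
  proper filter on the tensor space (the filter image of the net), eventually bounded by C.\<close>
definition bdd_approx_diag :: "('a, 'b) monoid_scheme \<Rightarrow> ('a \<times> 'a \<Rightarrow> complex) filter \<Rightarrow> real \<Rightarrow> bool" where
  "bdd_approx_diag G F C \<longleftrightarrow> F \<noteq> bot \<and>
     (\<forall>\<^sub>F \<mu> in F. \<mu> \<in> ZL1_tens G \<and> projnorm G \<mu> \<le> C) \<and>
     (\<forall>a\<in>ZL1 G.
        ((\<lambda>\<mu>. l1norm G (\<lambda>t. conv G (mtens G \<mu>) a t - a t)) \<longlongrightarrow> 0) F \<and>
        ((\<lambda>\<mu>. l1norm G (\<lambda>t. conv G a (mtens G \<mu>) t - a t)) \<longlongrightarrow> 0) F \<and>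
        ((\<lambda>\<mu>. projnorm G (\<lambda>z. lact G a \<mu> z - ract G \<mu> a z)) \<longlongrightarrow> 0) F)"

definition am_ZL1 :: "('a, 'b) monoid_scheme \<Rightarrow> real" where
  "am_ZL1 G = Inf {C. \<exists>F. bdd_approx_diag G F C}"

end

theory Submission
  imports Defs "HOL-Library.Function_Algebras"
begin

text \<open>The argument avoids characters. For a class function h let
  P h (x, y) = (1/|G|) sum_g h(g y g^-1 x) (conj_tensor); it lies in ZL1(G) (x) ZL1(G) and
  commutes with the module actions. The operator Z = m o P (conj_op) on ZL1(G) satisfies
  |G|^3 <Z h, h> = sum_(s,r) |sum_g h(g r g^-1 s)|^2 > 0 for h \<noteq> 0, so Z is invertible and
  D = P w with Z w = 1 is a diagonal. The functional T (inv_class_avg) averaging mu(x, y) over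
  the pairs with y conjugate to x^-1 has norm at most 1 for the projective norm, and
  T(D) = |G|^-2 sum_x |Cl(x)| D(x, x^-1), where the positive numbers D(x, x^-1) sum to |G|^2;
  hence T(D) > 1 once some conjugacy class has two elements. Finally every mu is close to
  P(mu(-, 1)) up to its commutators with the class sums, and T o P factors through Z, so
  T(mu) tends to T(D) along any approximate diagonal, which bounds its norms below by T(D).\<close>

lemma sum_reindex_bij_self:
  assumes "\<And>x. x \<in> A \<Longrightarrow> h x \<in> A" "\<And>x. x \<in> A \<Longrightarrow> k x \<in> A"
    "\<And>x. x \<in> A \<Longrightarrow> k (h x) = x" "\<And>x. x \<in> A \<Longrightarrow> h (k x) = x"
  shows "(\<Sum>x\<in>A. f (h x)) = (\<Sum>x\<in>A. f x)"
  by (rule sum.reindex_bij_witness[of _ k h]) (use assms in auto)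

lemma sum_fun_apply: "(sum F A) x = (\<Sum>c\<in>A. F c x)"
  by (induction A rule: infinite_finite_induct) auto

lemma (in vector_space) span_subset_span_independent_card:
  assumes C: "finite C" and D: "independent D" "D \<subseteq> span C" "card C \<le> card D"
  shows "span C \<subseteq> span D"
proof
  fix v assume v: "v \<in> span C"
  have finD: "finite D"
    using independent_span_bound[OF C D(1,2)] by (rule conjunct1)
  show "v \<in> span D"
  proof (rule ccontr)
    assume nv: "v \<notin> span D"
    have "independent (insert v D)"
      by (rule independent_insertI[OF nv D(1)])
    moreover have "insert v D \<subseteq> span C"
      using v D(2) by blast
    ultimately have "card (insert v D) \<le> card C"
      using independent_span_bound[OF C] by simp
    moreover have "v \<notin> D"
      using nv span_base by blast
    ultimately show False
      using card_insert_disjoint[OF finD] D(3) by simp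
  qed
qed

lemma (in vector_space) linear_inj_on_span_imp_onto:
  assumes lin: "Vector_Spaces.linear scale scale f" and B: "finite B"
    and into: "f ` span B \<subseteq> span B" and inj: "inj_on f (span B)"
  shows "f ` span B = span B"
proof -
  interpret f: Vector_Spaces.linear scale scale f by (fact lin)
  obtain C where C: "C \<subseteq> span B" "independent C" "span B \<subseteq> span C"
    by (meson basis_exists)
  have spanC: "span C = span B"
    by (rule subset_antisym[OF span_minimal[OF C(1) subspace_span] C(3)])
  have finC: "finite C"
    using independent_span_bound[OF B C(2) C(1)] by (rule conjunct1)
  have injC: "inj_on f (span C)"
    using inj spanC by simp
  have "span C \<subseteq> span (f ` C)"
  proof (rule span_subset_span_independent_card[OF finC])
    show "independent (f ` C)"
      by (rule f.independent_injective_image[OF C(2) injC])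
    show "f ` C \<subseteq> span C"
      using image_mono[OF C(1), of f] into spanC by auto
    show "card C \<le> card (f ` C)"
      using card_image[OF inj_on_subset[OF injC span_superset]] by simp
  qed
  also have "span (f ` C) = f ` span C"
    by (rule f.span_image)
  finally have "span B \<subseteq> f ` span B"
    using spanC by simp
  with into show ?thesis
    by (rule subset_antisym)
qed

interpretation fun_vs: vector_space "\<lambda>(c::complex) (f::'a \<Rightarrow> complex). (\<lambda>x. c * f x)"
  by unfold_locales (auto simp: fun_eq_iff algebra_simps)

locale finite_group = group G for G :: "('a, 'b) monoid_scheme" (structure) +
  assumes finite_carrier: "finite (carrier G)"

lemma finite_groupI: "group G \<Longrightarrow> finite (carrier G) \<Longrightarrow> finite_group G"
  by (simp add: finite_group_def finite_group_axioms_def)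

context finite_group begin

abbreviation "n \<equiv> card (carrier G)"

lemma n_pos: "n > 0"
  using finite_carrier one_closed by (auto simp: card_gt_0_iff)

lemma of_nat_n_nonzero: "(of_nat n :: complex) \<noteq> 0"
  using n_pos by simp

lemma inv_mult_cancel [simp]: "a \<in> carrier G \<Longrightarrow> b \<in> carrier G \<Longrightarrow> inv a \<otimes> (a \<otimes> b) = b"
  by (simp add: m_assoc[symmetric])

lemma mult_inv_cancel [simp]: "a \<in> carrier G \<Longrightarrow> b \<in> carrier G \<Longrightarrow> a \<otimes> (inv a \<otimes> b) = b"
  by (simp add: m_assoc[symmetric])

lemmas group_simps = m_assoc inv_mult_group inv_inv inv_mult_cancel mult_inv_cancel
  l_inv r_inv l_one r_one inv_closed m_closed one_closed inv_one

lemma conj_eq_iff: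
  assumes "g \<in> carrier G" "c \<in> carrier G" "x \<in> carrier G"
  shows "(g \<otimes> c \<otimes> inv g = x) \<longleftrightarrow> (c = inv g \<otimes> x \<otimes> g)"
proof
  assume "g \<otimes> c \<otimes> inv g = x"
  then have "inv g \<otimes> (g \<otimes> c \<otimes> inv g) \<otimes> g = inv g \<otimes> x \<otimes> g" by simp
  then show "c = inv g \<otimes> x \<otimes> g" using assms by (simp add: group_simps)
qed (use assms in \<open>simp add: group_simps\<close>)

lemma conj_cancel:
  assumes "y \<in> carrier G" "a \<in> carrier G" "b \<in> carrier G"
  shows "(y \<otimes> a \<otimes> inv y = y \<otimes> b \<otimes> inv y) \<longleftrightarrow> a = b"
proof -
  have "(y \<otimes> a \<otimes> inv y = y \<otimes> b \<otimes> inv y) \<longleftrightarrow> (a = inv y \<otimes> (y \<otimes> b \<otimes> inv y) \<otimes> y)"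
    using assms by (intro conj_eq_iff) auto
  then show ?thesis
    using assms by (simp add: group_simps)
qed

lemma sum_left_translate:
  "a \<in> carrier G \<Longrightarrow> (\<Sum>x\<in>carrier G. f (a \<otimes> x)) = (\<Sum>x\<in>carrier G. f x)"
  by (rule sum_reindex_bij_self[where k="\<lambda>x. inv a \<otimes> x"]) (auto simp: group_simps)

lemma sum_right_translate:
  "a \<in> carrier G \<Longrightarrow> (\<Sum>x\<in>carrier G. f (x \<otimes> a)) = (\<Sum>x\<in>carrier G. f x)"
  by (rule sum_reindex_bij_self[where k="\<lambda>x. x \<otimes> inv a"]) (auto simp: group_simps)

lemma sum_inverse: "(\<Sum>x\<in>carrier G. f (inv x)) = (\<Sum>x\<in>carrier G. f x)"
  by (rule sum_reindex_bij_self[where k="\<lambda>x. inv x"]) (auto simp: group_simps)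

lemma sum_conj:
  "y \<in> carrier G \<Longrightarrow> (\<Sum>x\<in>carrier G. f (y \<otimes> x \<otimes> inv y)) = (\<Sum>x\<in>carrier G. f x)"
  by (rule sum_reindex_bij_self[where k="\<lambda>x. inv y \<otimes> x \<otimes> y"]) (auto simp: group_simps)

end

definition conj_count :: "('a, 'b) monoid_scheme \<Rightarrow> 'a \<Rightarrow> 'a \<Rightarrow> complex" where
  "conj_count G c s = (if s \<in> carrier G
     then (\<Sum>g\<in>carrier G. if g \<otimes>\<^bsub>G\<^esub> c \<otimes>\<^bsub>G\<^esub> inv\<^bsub>G\<^esub> g = s then 1 else 0) else 0)"

definition L1_unit :: "('a, 'b) monoid_scheme \<Rightarrow> 'a \<Rightarrow> complex" where
  "L1_unit G = (\<lambda>t. if t = \<one>\<^bsub>G\<^esub> then of_nat (card (carrier G)) else 0)"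

context finite_group begin

lemma ZL1_outside: "f \<in> ZL1 G \<Longrightarrow> x \<notin> carrier G \<Longrightarrow> f x = 0"
  by (auto simp: ZL1_def)

lemma ZL1_conj: "f \<in> ZL1 G \<Longrightarrow> x \<in> carrier G \<Longrightarrow> y \<in> carrier G \<Longrightarrow> f (y \<otimes> x \<otimes> inv y) = f x"
  by (auto simp: ZL1_def)

lemma ZL1_commute:
  assumes "f \<in> ZL1 G" "p \<in> carrier G" "q \<in> carrier G"
  shows "f (p \<otimes> q) = f (q \<otimes> p)"
proof -
  have "f (p \<otimes> (q \<otimes> p) \<otimes> inv p) = f (q \<otimes> p)"
    using assms by (intro ZL1_conj) auto
  then show ?thesis
    using assms by (simp add: group_simps)
qed

lemma ZL1_lincomb: "(\<And>c. c \<in> A \<Longrightarrow> W c \<in> ZL1 G) \<Longrightarrow> (\<lambda>t. \<Sum>c\<in>A. a c * W c t) \<in> ZL1 G"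
  by (auto simp: ZL1_def intro!: sum.neutral sum.cong)

lemma ZL1_diff: "f \<in> ZL1 G \<Longrightarrow> g \<in> ZL1 G \<Longrightarrow> (\<lambda>t. f t - g t) \<in> ZL1 G"
  by (auto simp: ZL1_def)

lemma ZL1_uminus: "f \<in> ZL1 G \<Longrightarrow> (\<lambda>t. - f t) \<in> ZL1 G"
  by (auto simp: ZL1_def)

lemma ZL1_divide: "f \<in> ZL1 G \<Longrightarrow> (\<lambda>t. f t / c) \<in> ZL1 G"
  by (auto simp: ZL1_def)

lemma ZL1_subspace: "fun_vs.subspace (ZL1 G)"
  unfolding fun_vs.subspace_def by (auto simp: ZL1_def)

lemma conv_ZL1:
  assumes a: "a \<in> ZL1 G" and b: "b \<in> ZL1 G"
  shows "conv G a b \<in> ZL1 G"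
proof -
  have "conv G a b (y \<otimes> t \<otimes> inv y) = conv G a b t" if y: "y \<in> carrier G" and t: "t \<in> carrier G" for y t
  proof -
    have "(\<Sum>s\<in>carrier G. a s * b (inv s \<otimes> (y \<otimes> t \<otimes> inv y)))
        = (\<Sum>s\<in>carrier G. a (y \<otimes> s \<otimes> inv y) * b (inv (y \<otimes> s \<otimes> inv y) \<otimes> (y \<otimes> t \<otimes> inv y)))"
      using y by (rule sum_conj[symmetric])
    also have "\<dots> = (\<Sum>s\<in>carrier G. a s * b (inv s \<otimes> t))"
    proof (intro sum.cong refl)
      fix s assume s: "s \<in> carrier G"
      have "inv (y \<otimes> s \<otimes> inv y) \<otimes> (y \<otimes> t \<otimes> inv y) = y \<otimes> (inv s \<otimes> t) \<otimes> inv y"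
        using s t y by (simp add: group_simps)
      then show "a (y \<otimes> s \<otimes> inv y) * b (inv (y \<otimes> s \<otimes> inv y) \<otimes> (y \<otimes> t \<otimes> inv y)) = a s * b (inv s \<otimes> t)"
        using s t y a b by (simp add: ZL1_conj)
    qed
    finally show ?thesis
      using y t by (simp add: conv_def)
  qed
  then show ?thesis
    by (auto simp: ZL1_def conv_def)
qed

lemma L1_unit_ZL1: "L1_unit G \<in> ZL1 G"
proof -
  have "(y \<otimes> x \<otimes> inv y = \<one>) = (x = \<one>)" if "x \<in> carrier G" "y \<in> carrier G" for x y
    using that conj_eq_iff[of y x \<one>] by simp
  then show ?thesis
    by (auto simp: ZL1_def L1_unit_def)
qed

lemma conv_L1_unit_right:
  assumes "\<And>x. x \<notin> carrier G \<Longrightarrow> f x = 0"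
  shows "conv G f (L1_unit G) = f"
proof
  fix t show "conv G f (L1_unit G) t = f t"
  proof (cases "t \<in> carrier G")
    case True
    have "(\<Sum>s\<in>carrier G. f s * L1_unit G (inv s \<otimes> t)) = (\<Sum>s\<in>carrier G. if s = t then f t * of_nat n else 0)"
    proof (intro sum.cong refl)
      fix s assume s: "s \<in> carrier G"
      have "(inv s \<otimes> t = \<one>) = (s = t)"
        using s True inv_comm inv_equality by fastforce
      then show "f s * L1_unit G (inv s \<otimes> t) = (if s = t then f t * of_nat n else 0)"
        by (auto simp: L1_unit_def)
    qed
    then show ?thesis
      using True finite_carrier of_nat_n_nonzero by (simp add: conv_def sum.delta')
  next
    case False
    then show ?thesis
      using assms by (simp add: conv_def)
  qed
qed

lemma conv_L1_unit_left:
  assumes "\<And>x. x \<notin> carrier G \<Longrightarrow> f x = 0"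
  shows "conv G (L1_unit G) f = f"
proof
  fix t show "conv G (L1_unit G) f t = f t"
  proof (cases "t \<in> carrier G")
    case True
    have "(\<Sum>s\<in>carrier G. L1_unit G s * f (inv s \<otimes> t)) = (\<Sum>s\<in>carrier G. if s = \<one> then of_nat n * f t else 0)"
      using True by (intro sum.cong refl) (auto simp: L1_unit_def)
    then show ?thesis
      using True finite_carrier of_nat_n_nonzero by (simp add: conv_def)
  next
    case False
    then show ?thesis
      using assms by (simp add: conv_def)
  qed
qed

lemma conj_count_ZL1:
  assumes c: "c \<in> carrier G"
  shows "conj_count G c \<in> ZL1 G"
proof -
  have "conj_count G c (y \<otimes> x \<otimes> inv y) = conj_count G c x"
    if y: "y \<in> carrier G" and x: "x \<in> carrier G" for x y
  proof -
    have "(\<Sum>g\<in>carrier G. if g \<otimes> c \<otimes> inv g = y \<otimes> x \<otimes> inv y then 1 else 0)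
        = (\<Sum>g\<in>carrier G. if (y \<otimes> g) \<otimes> c \<otimes> inv (y \<otimes> g) = y \<otimes> x \<otimes> inv y then 1 else (0::complex))"
      using y by (rule sum_left_translate[symmetric])
    also have "\<dots> = (\<Sum>g\<in>carrier G. if g \<otimes> c \<otimes> inv g = x then 1 else 0)"
    proof (intro sum.cong refl)
      fix g assume g: "g \<in> carrier G"
      have "(y \<otimes> g) \<otimes> c \<otimes> inv (y \<otimes> g) = y \<otimes> (g \<otimes> c \<otimes> inv g) \<otimes> inv y"
        using g y c by (simp add: group_simps)
      then show "(if (y \<otimes> g) \<otimes> c \<otimes> inv (y \<otimes> g) = y \<otimes> x \<otimes> inv y then 1 else (0::complex))
          = (if g \<otimes> c \<otimes> inv g = x then 1 else 0)"
        using conj_cancel g y c x by simp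
    qed
    finally show ?thesis
      using x y by (simp add: conj_count_def)
  qed
  then show ?thesis
    by (auto simp: ZL1_def conj_count_def)
qed

lemma sum_conj_count:
  assumes "c \<in> carrier G"
  shows "(\<Sum>s\<in>carrier G. conj_count G c s * F s) = (\<Sum>g\<in>carrier G. F (g \<otimes> c \<otimes> inv g))"
proof -
  have "(\<Sum>s\<in>carrier G. conj_count G c s * F s)
      = (\<Sum>s\<in>carrier G. \<Sum>g\<in>carrier G. if g \<otimes> c \<otimes> inv g = s then F s else 0)"
    by (simp add: conj_count_def sum_distrib_right if_distrib[of "\<lambda>v. v * _"] cong: if_cong)
  also have "\<dots> = (\<Sum>g\<in>carrier G. \<Sum>s\<in>carrier G. if g \<otimes> c \<otimes> inv g = s then F s else 0)"
    by (rule sum.swap)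
  also have "\<dots> = (\<Sum>g\<in>carrier G. F (g \<otimes> c \<otimes> inv g))"
    using assms finite_carrier by (intro sum.cong refl) (simp add: sum.delta)
  finally show ?thesis .
qed

lemma class_function_expansion:
  assumes "f \<in> ZL1 G" "x \<in> carrier G"
  shows "(\<Sum>c\<in>carrier G. conj_count G c x * f c) = of_nat n * f x"
proof -
  have "(\<Sum>c\<in>carrier G. conj_count G c x * f c)
      = (\<Sum>c\<in>carrier G. \<Sum>g\<in>carrier G. if c = inv g \<otimes> x \<otimes> g then f c else 0)"
    using assms by (intro sum.cong refl)
      (simp add: conj_count_def sum_distrib_right conj_eq_iff if_distrib[of "\<lambda>v. v * _"] cong: if_cong)
  also have "\<dots> = (\<Sum>g\<in>carrier G. \<Sum>c\<in>carrier G. if c = inv g \<otimes> x \<otimes> g then f c else 0)"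
    by (rule sum.swap)
  also have "\<dots> = (\<Sum>g\<in>carrier G. f (inv g \<otimes> x \<otimes> inv (inv g)))"
    using assms finite_carrier by (intro sum.cong refl) (simp add: sum.delta')
  also have "\<dots> = (\<Sum>g\<in>carrier G. f x)"
    using assms by (intro sum.cong refl ZL1_conj) auto
  finally show ?thesis
    by simp
qed

lemma conj_count_self_nonzero:
  assumes c: "c \<in> carrier G"
  shows "conj_count G c c \<noteq> 0"
proof -
  have "Re (if \<one> \<otimes> c \<otimes> inv \<one> = c then 1 else (0::complex))
      \<le> (\<Sum>g\<in>carrier G. Re (if g \<otimes> c \<otimes> inv g = c then 1 else (0::complex)))"
    using c finite_carrier by (intro member_le_sum) auto
  then have "1 \<le> Re (conj_count G c c)"
    using c by (simp add: conj_count_def)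
  then show ?thesis
    by auto
qed

lemma ZL1_span_conj_count: "ZL1 G = fun_vs.span (conj_count G ` carrier G)"
proof
  show "fun_vs.span (conj_count G ` carrier G) \<subseteq> ZL1 G"
    by (rule fun_vs.span_minimal) (auto intro: conj_count_ZL1 ZL1_subspace)
next
  show "ZL1 G \<subseteq> fun_vs.span (conj_count G ` carrier G)"
  proof
    fix f assume f: "f \<in> ZL1 G"
    have "f = (\<Sum>c\<in>carrier G. (\<lambda>x. (f c / of_nat n) * conj_count G c x))"
    proof
      fix x show "f x = (\<Sum>c\<in>carrier G. (\<lambda>x. (f c / of_nat n) * conj_count G c x)) x"
      proof (cases "x \<in> carrier G")
        case True
        have "(\<Sum>c\<in>carrier G. (f c / of_nat n) * conj_count G c x)
            = (\<Sum>c\<in>carrier G. conj_count G c x * f c) / of_nat n"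
          by (simp add: sum_divide_distrib mult_ac)
        then show ?thesis
          using class_function_expansion[OF f True] of_nat_n_nonzero by (simp add: sum_fun_apply)
      next
        case False
        then show ?thesis
          using f by (simp add: sum_fun_apply conj_count_def ZL1_outside)
      qed
    qed
    also have "\<dots> \<in> fun_vs.span (conj_count G ` carrier G)"
      by (intro fun_vs.span_sum fun_vs.span_scale fun_vs.span_base) auto
    finally show "f \<in> fun_vs.span (conj_count G ` carrier G)" .
  qed
qed

lemma tens_reps_eval:
  assumes "ps \<in> tens_reps G \<mu>"
  shows "\<mu> (x, y) = (\<Sum>i<length ps. fst (ps!i) x * snd (ps!i) y)"
  using assms by (simp add: tens_reps_def sum_list_sum_nth atLeast0LessThan case_prod_unfold)

lemma tens_reps_ZL1:
  assumes "ps \<in> tens_reps G \<mu>" "i < length ps"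
  shows "fst (ps!i) \<in> ZL1 G" "snd (ps!i) \<in> ZL1 G"
proof -
  have "ps!i \<in> ZL1 G \<times> ZL1 G"
    using assms nth_mem by (auto simp: tens_reps_def)
  then show "fst (ps!i) \<in> ZL1 G" "snd (ps!i) \<in> ZL1 G"
    by auto
qed

lemma ZL1_tens_outside:
  assumes "\<mu> \<in> ZL1_tens G" "x \<notin> carrier G \<or> y \<notin> carrier G"
  shows "\<mu> (x, y) = 0"
proof -
  obtain ps where ps: "ps \<in> tens_reps G \<mu>"
    using assms by (auto simp: ZL1_tens_def)
  show ?thesis
    unfolding tens_reps_eval[OF ps]
    using assms tens_reps_ZL1[OF ps] by (intro sum.neutral) (auto simp: ZL1_outside)
qed

lemma ZL1_tens_slice_fst:
  assumes "\<mu> \<in> ZL1_tens G"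
  shows "(\<lambda>t. \<mu> (t, y)) \<in> ZL1 G"
proof -
  obtain ps where ps: "ps \<in> tens_reps G \<mu>"
    using assms by (auto simp: ZL1_tens_def)
  show ?thesis
    unfolding tens_reps_eval[OF ps] ZL1_def
    using tens_reps_ZL1[OF ps] by (auto simp: ZL1_outside ZL1_conj intro!: sum.neutral sum.cong)
qed

lemma ZL1_tens_slice_snd:
  assumes "\<mu> \<in> ZL1_tens G"
  shows "(\<lambda>t. \<mu> (x, t)) \<in> ZL1 G"
proof -
  obtain ps where ps: "ps \<in> tens_reps G \<mu>"
    using assms by (auto simp: ZL1_tens_def)
  show ?thesis
    unfolding tens_reps_eval[OF ps] ZL1_def
    using tens_reps_ZL1[OF ps] by (auto simp: ZL1_outside ZL1_conj intro!: sum.neutral sum.cong)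
qed

lemma ZL1_tens_conj:
  assumes mu: "\<mu> \<in> ZL1_tens G" and "x \<in> carrier G" "y \<in> carrier G" "k \<in> carrier G"
  shows "\<mu> (k \<otimes> x \<otimes> inv k, k \<otimes> y \<otimes> inv k) = \<mu> (x, y)"
proof -
  have "\<mu> (k \<otimes> x \<otimes> inv k, k \<otimes> y \<otimes> inv k) = \<mu> (x, k \<otimes> y \<otimes> inv k)"
    using ZL1_conj[OF ZL1_tens_slice_fst[OF mu]] assms by simp
  also have "\<dots> = \<mu> (x, y)"
    using ZL1_conj[OF ZL1_tens_slice_snd[OF mu]] assms by simp
  finally show ?thesis .
qed

lemma l1norm_nonneg: "l1norm G f \<ge> 0"
  by (simp add: l1norm_def sum_nonneg)

lemma sum_norm_eq_l1norm: "(\<Sum>s\<in>carrier G. cmod (f s)) = real n * l1norm G f"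
  using n_pos by (simp add: l1norm_def)

lemma norm_le_l1norm: "s \<in> carrier G \<Longrightarrow> cmod (f s) \<le> real n * l1norm G f"
  using finite_carrier by (auto simp: sum_norm_eq_l1norm[symmetric] intro: member_le_sum)

lemma projnorm_le:
  "ps \<in> tens_reps G \<mu> \<Longrightarrow> projnorm G \<mu> \<le> sum_list (map (\<lambda>(a, b). l1norm G a * l1norm G b) ps)"
  unfolding projnorm_def
  by (rule cInf_lower) (auto intro!: bdd_belowI[of _ 0] sum_list_nonneg simp: l1norm_nonneg)

lemma projnorm_ge:
  assumes "\<mu> \<in> ZL1_tens G"
    and "\<And>ps. ps \<in> tens_reps G \<mu> \<Longrightarrow> c \<le> sum_list (map (\<lambda>(a, b). l1norm G a * l1norm G b) ps)"
  shows "c \<le> projnorm G \<mu>"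
  unfolding projnorm_def using assms by (intro cInf_greatest) (auto simp: ZL1_tens_def)

lemma projnorm_nonneg: "\<mu> \<in> ZL1_tens G \<Longrightarrow> 0 \<le> projnorm G \<mu>"
  by (rule projnorm_ge) (auto intro!: sum_list_nonneg simp: l1norm_nonneg)

lemma projnorm_zero: "projnorm G (\<lambda>z. 0) = 0"
proof -
  have "[] \<in> tens_reps G (\<lambda>z. 0)"
    by (simp add: tens_reps_def)
  then show ?thesis
    using projnorm_le[of "[]"] projnorm_nonneg[of "\<lambda>z. 0"] by (force simp: ZL1_tens_def)
qed

lemma projnorm_ge_functional:
  assumes mu: "\<mu> \<in> ZL1_tens G" and phi: "\<And>x y. cmod (\<phi> x y) \<le> 1"
  shows "cmod ((\<Sum>x\<in>carrier G. \<Sum>y\<in>carrier G. \<phi> x y * \<mu> (x, y)) / (of_nat n)^2) \<le> projnorm G \<mu>"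
proof (rule projnorm_ge[OF mu])
  fix ps assume ps: "ps \<in> tens_reps G \<mu>"
  have "cmod (\<Sum>x\<in>carrier G. \<Sum>y\<in>carrier G. \<phi> x y * \<mu> (x, y))
     = cmod (\<Sum>i<length ps. \<Sum>x\<in>carrier G. \<Sum>y\<in>carrier G. \<phi> x y * (fst (ps!i) x * snd (ps!i) y))"
    unfolding tens_reps_eval[OF ps] sum_distrib_left
    by (simp add: sum.swap[of _ "{..<length ps}"])
  also have "\<dots> \<le> (\<Sum>i<length ps. \<Sum>x\<in>carrier G. \<Sum>y\<in>carrier G. cmod (\<phi> x y * (fst (ps!i) x * snd (ps!i) y)))"
    by (rule order_trans[OF norm_sum sum_mono], rule order_trans[OF norm_sum sum_mono], rule norm_sum)
  also have "\<dots> \<le> (\<Sum>i<length ps. \<Sum>x\<in>carrier G. \<Sum>y\<in>carrier G. cmod (fst (ps!i) x) * cmod (snd (ps!i) y))"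
    by (intro sum_mono) (auto simp: norm_mult intro!: mult_left_le_one_le phi mult_nonneg_nonneg)
  also have "\<dots> = (\<Sum>i<length ps. (real n * l1norm G (fst (ps!i))) * (real n * l1norm G (snd (ps!i))))"
    by (simp add: sum_norm_eq_l1norm[symmetric] sum_product)
  also have "\<dots> = (real n)^2 * sum_list (map (\<lambda>(a, b). l1norm G a * l1norm G b) ps)"
    by (simp add: sum_list_sum_nth atLeast0LessThan case_prod_unfold sum_distrib_left
        power2_eq_square mult_ac)
  finally show "cmod ((\<Sum>x\<in>carrier G. \<Sum>y\<in>carrier G. \<phi> x y * \<mu> (x, y)) / (of_nat n)^2)
      \<le> sum_list (map (\<lambda>(a, b). l1norm G a * l1norm G b) ps)"
    using n_pos by (simp add: norm_divide norm_power field_simps)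
qed

lemma ZL1_tens_norm_le_projnorm:
  assumes "\<mu> \<in> ZL1_tens G" "x \<in> carrier G" "y \<in> carrier G"
  shows "cmod (\<mu> (x, y)) \<le> (real n)^2 * projnorm G \<mu>"
proof -
  let ?\<phi> = "\<lambda>x' y'. if x' = x then if y' = y then 1 else 0 else (0::complex)"
  have "(\<Sum>y'\<in>carrier G. ?\<phi> x' y' * \<mu> (x', y')) = (if x' = x then \<mu> (x, y) else 0)" for x'
    using assms finite_carrier
    by (cases "x' = x") (simp_all add: if_distrib[of "\<lambda>v. v * _"] sum.delta' cong: if_cong)
  then have "(\<Sum>x'\<in>carrier G. \<Sum>y'\<in>carrier G. ?\<phi> x' y' * \<mu> (x', y')) = \<mu> (x, y)"
    using assms finite_carrier by (simp add: sum.delta')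
  moreover have "cmod ((\<Sum>x'\<in>carrier G. \<Sum>y'\<in>carrier G. ?\<phi> x' y' * \<mu> (x', y')) / (of_nat n)^2)
      \<le> projnorm G \<mu>"
    using assms by (intro projnorm_ge_functional) auto
  ultimately show ?thesis
    using n_pos by (simp add: norm_divide norm_power field_simps)
qed

lemma lact_eval:
  assumes ps: "ps \<in> tens_reps G \<mu>"
  shows "lact G a \<mu> (x, y) = sum_list (map (\<lambda>p. conv G a (fst p) x * snd p y) ps)"
proof -
  have "lact G a \<mu> (x, y) = (\<Sum>i<length ps. conv G a (fst (ps!i)) x * snd (ps!i) y)"
    unfolding lact_def conv_def tens_reps_eval[OF ps]
    by (simp add: sum_distrib_left sum_divide_distrib sum.swap[of _ "{..<length ps}"] mult_ac)
  then show ?thesis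
    by (simp add: sum_list_sum_nth atLeast0LessThan)
qed

lemma ract_eval:
  assumes ps: "ps \<in> tens_reps G \<mu>"
  shows "ract G \<mu> a (x, y) = sum_list (map (\<lambda>p. fst p x * conv G (snd p) a y) ps)"
proof -
  have "ract G \<mu> a (x, y) = (\<Sum>i<length ps. fst (ps!i) x * conv G (snd (ps!i)) a y)"
    unfolding ract_def conv_def tens_reps_eval[OF ps]
    by (simp add: sum_distrib_left sum_distrib_right sum_divide_distrib
        sum.swap[of _ "{..<length ps}"] mult_ac)
  then show ?thesis
    by (simp add: sum_list_sum_nth atLeast0LessThan)
qed

lemma commutator_ZL1_tens:
  assumes a: "a \<in> ZL1 G" and mu: "\<mu> \<in> ZL1_tens G"
  shows "(\<lambda>z. lact G a \<mu> z - ract G \<mu> a z) \<in> ZL1_tens G"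
proof -
  obtain ps where ps: "ps \<in> tens_reps G \<mu>"
    using mu by (auto simp: ZL1_tens_def)
  let ?qs = "map (\<lambda>p. (conv G a (fst p), snd p)) ps @ map (\<lambda>p. (\<lambda>t. - fst p t, conv G (snd p) a)) ps"
  have "set ?qs \<subseteq> ZL1 G \<times> ZL1 G"
    using ps a by (force simp: tens_reps_def intro!: conv_ZL1 ZL1_uminus)
  moreover have "lact G a \<mu> (x, y) - ract G \<mu> a (x, y) = sum_list (map (\<lambda>(p, q). p x * q y) ?qs)" for x y
    unfolding lact_eval[OF ps] ract_eval[OF ps]
    by (simp add: o_def case_prod_unfold uminus_sum_list_map diff_conv_add_uminus)
  ultimately have "?qs \<in> tens_reps G (\<lambda>z. lact G a \<mu> z - ract G \<mu> a z)"
    by (auto simp: tens_reps_def)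
  then show ?thesis
    by (auto simp: ZL1_tens_def)
qed

lemma mtens_outside: "t \<notin> carrier G \<Longrightarrow> mtens G \<mu> t = 0"
  by (simp add: mtens_def)

lemma mtens_add: "mtens G (\<lambda>z. M z + N z) t = mtens G M t + mtens G N t"
  by (simp add: mtens_def sum.distrib add_divide_distrib)

lemma mtens_norm_le:
  assumes "\<And>z. cmod (F z) \<le> B"
  shows "cmod (mtens G F t) \<le> B"
proof (cases "t \<in> carrier G")
  case True
  have "cmod (\<Sum>s\<in>carrier G. F (s, inv s \<otimes> t)) \<le> (\<Sum>s\<in>carrier G. B)"
    by (rule order_trans[OF norm_sum sum_mono]) (rule assms)
  then show ?thesis
    using True n_pos by (simp add: mtens_def norm_divide field_simps)
next
  case False
  then show ?thesis
    using order_trans[OF norm_ge_zero assms] by (simp add: mtens_def)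
qed

lemma mtens_ZL1:
  assumes mu: "\<mu> \<in> ZL1_tens G"
  shows "mtens G \<mu> \<in> ZL1 G"
proof -
  have "mtens G \<mu> (y \<otimes> t \<otimes> inv y) = mtens G \<mu> t" if y: "y \<in> carrier G" and t: "t \<in> carrier G" for y t
  proof -
    have "(\<Sum>s\<in>carrier G. \<mu> (s, inv s \<otimes> (y \<otimes> t \<otimes> inv y)))
        = (\<Sum>s\<in>carrier G. \<mu> (y \<otimes> s \<otimes> inv y, inv (y \<otimes> s \<otimes> inv y) \<otimes> (y \<otimes> t \<otimes> inv y)))"
      using y by (rule sum_conj[symmetric])
    also have "\<dots> = (\<Sum>s\<in>carrier G. \<mu> (s, inv s \<otimes> t))"
    proof (intro sum.cong refl)
      fix s assume s: "s \<in> carrier G"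
      have "inv (y \<otimes> s \<otimes> inv y) \<otimes> (y \<otimes> t \<otimes> inv y) = y \<otimes> (inv s \<otimes> t) \<otimes> inv y"
        using s t y by (simp add: group_simps)
      then show "\<mu> (y \<otimes> s \<otimes> inv y, inv (y \<otimes> s \<otimes> inv y) \<otimes> (y \<otimes> t \<otimes> inv y)) = \<mu> (s, inv s \<otimes> t)"
        using ZL1_tens_conj[OF mu s _ y, of "inv s \<otimes> t"] s t by simp
    qed
    finally show ?thesis
      using y t by (simp add: mtens_def)
  qed
  then show ?thesis
    by (auto simp: ZL1_def mtens_def)
qed

end

section \<open>The tensors P h and the operator Z\<close>

definition conj_tensor :: "('a, 'b) monoid_scheme \<Rightarrow> ('a \<Rightarrow> complex) \<Rightarrow> 'a \<times> 'a \<Rightarrow> complex" where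
  "conj_tensor G h = (\<lambda>(x, y). if x \<in> carrier G \<and> y \<in> carrier G
     then (\<Sum>g\<in>carrier G. h (g \<otimes>\<^bsub>G\<^esub> y \<otimes>\<^bsub>G\<^esub> inv\<^bsub>G\<^esub> g \<otimes>\<^bsub>G\<^esub> x)) / of_nat (card (carrier G))
     else 0)"

definition conj_op :: "('a, 'b) monoid_scheme \<Rightarrow> ('a \<Rightarrow> complex) \<Rightarrow> 'a \<Rightarrow> complex" where
  "conj_op G h = mtens G (conj_tensor G h)"

context finite_group begin

lemma conj_tensor_outside: "x \<notin> carrier G \<or> y \<notin> carrier G \<Longrightarrow> conj_tensor G h (x, y) = 0"
  by (auto simp: conj_tensor_def)

lemma conj_tensor_eval:
  "x \<in> carrier G \<Longrightarrow> y \<in> carrier G \<Longrightarrow>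
   conj_tensor G h (x, y) = (\<Sum>g\<in>carrier G. h (g \<otimes> y \<otimes> inv g \<otimes> x)) / of_nat n"
  by (simp add: conj_tensor_def)

lemma conj_tensor_conj_fst:
  assumes h: "h \<in> ZL1 G" and x: "x \<in> carrier G" and y: "y \<in> carrier G" and k: "k \<in> carrier G"
  shows "conj_tensor G h (k \<otimes> x \<otimes> inv k, y) = conj_tensor G h (x, y)"
proof -
  have "(\<Sum>g\<in>carrier G. h (g \<otimes> y \<otimes> inv g \<otimes> (k \<otimes> x \<otimes> inv k)))
      = (\<Sum>g\<in>carrier G. h ((inv k \<otimes> g) \<otimes> y \<otimes> inv (inv k \<otimes> g) \<otimes> x))"
  proof (intro sum.cong refl)
    fix g assume g: "g \<in> carrier G"
    have "h (inv k \<otimes> (g \<otimes> y \<otimes> inv g \<otimes> (k \<otimes> x \<otimes> inv k)) \<otimes> inv (inv k))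
        = h (g \<otimes> y \<otimes> inv g \<otimes> (k \<otimes> x \<otimes> inv k))"
      using g x y k h by (intro ZL1_conj) auto
    then show "h (g \<otimes> y \<otimes> inv g \<otimes> (k \<otimes> x \<otimes> inv k)) = h ((inv k \<otimes> g) \<otimes> y \<otimes> inv (inv k \<otimes> g) \<otimes> x)"
      using g x y k by (simp add: group_simps)
  qed
  also have "\<dots> = (\<Sum>g\<in>carrier G. h (g \<otimes> y \<otimes> inv g \<otimes> x))"
    using k by (intro sum_left_translate) auto
  finally show ?thesis
    using x y k by (simp add: conj_tensor_eval)
qed

lemma conj_tensor_conj_snd:
  assumes x: "x \<in> carrier G" and y: "y \<in> carrier G" and k: "k \<in> carrier G"
  shows "conj_tensor G h (x, k \<otimes> y \<otimes> inv k) = conj_tensor G h (x, y)"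
proof -
  have "(\<Sum>g\<in>carrier G. h (g \<otimes> (k \<otimes> y \<otimes> inv k) \<otimes> inv g \<otimes> x))
      = (\<Sum>g\<in>carrier G. h ((g \<otimes> k) \<otimes> y \<otimes> inv (g \<otimes> k) \<otimes> x))"
    using x y k by (intro sum.cong refl) (simp add: group_simps)
  also have "\<dots> = (\<Sum>g\<in>carrier G. h (g \<otimes> y \<otimes> inv g \<otimes> x))"
    using k by (intro sum_right_translate) auto
  finally show ?thesis
    using x y k by (simp add: conj_tensor_eval)
qed

lemma conj_tensor_slice_fst:
  assumes h: "h \<in> ZL1 G"
  shows "(\<lambda>t. conj_tensor G h (t, y)) \<in> ZL1 G"
  unfolding ZL1_def
  by (cases "y \<in> carrier G") (auto simp: conj_tensor_conj_fst[OF h] conj_tensor_outside)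

lemma conj_tensor_slice_snd: "(\<lambda>t. conj_tensor G h (x, t)) \<in> ZL1 G"
  unfolding ZL1_def
  by (cases "x \<in> carrier G") (auto simp: conj_tensor_conj_snd conj_tensor_outside)

lemma conj_tensor_ZL1_tens:
  assumes h: "h \<in> ZL1 G"
  shows "conj_tensor G h \<in> ZL1_tens G"
proof -
  obtain xs where xs: "set xs = carrier G" "distinct xs"
    using finite_carrier finite_distinct_list by blast
  let ?ps = "map (\<lambda>c. (\<lambda>x. conj_count G c x / of_nat n, \<lambda>y. conj_tensor G h (c, y))) xs"
  have "set ?ps \<subseteq> ZL1 G \<times> ZL1 G"
    using xs by (auto intro!: ZL1_divide conj_count_ZL1 conj_tensor_slice_snd)
  moreover have "conj_tensor G h (x, y) = sum_list (map (\<lambda>(a, b). a x * b y) ?ps)" for x y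
  proof -
    have "sum_list (map (\<lambda>(a, b). a x * b y) ?ps)
        = (\<Sum>c\<in>carrier G. conj_count G c x * conj_tensor G h (c, y)) / of_nat n"
      using xs by (simp add: sum_list_distinct_conv_sum_set sum_divide_distrib)
    also have "\<dots> = conj_tensor G h (x, y)"
      using class_function_expansion[OF conj_tensor_slice_fst[OF h]] of_nat_n_nonzero
      by (cases "x \<in> carrier G") (simp_all add: conj_count_def conj_tensor_outside)
    finally show ?thesis
      by simp
  qed
  ultimately have "?ps \<in> tens_reps G (conj_tensor G h)"
    unfolding tens_reps_def by blast
  then show ?thesis
    by (auto simp: ZL1_tens_def)
qed

lemma conj_tensor_diff: "conj_tensor G (\<lambda>t. f t - g t) = (\<lambda>z. conj_tensor G f z - conj_tensor G g z)"
  by (auto simp: conj_tensor_def sum_subtractf diff_divide_distrib)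

lemma conj_tensor_lincomb:
  "conj_tensor G (\<lambda>t. \<Sum>c\<in>A. a c * W c t) z = (\<Sum>c\<in>A. a c * conj_tensor G (W c) z)"
  by (cases z) (auto simp: conj_tensor_def sum_distrib_left sum_divide_distrib sum.swap[of _ A] mult_ac)

lemma conj_tensor_commutes_sum:
  assumes a: "a \<in> ZL1 G" and g: "g \<in> carrier G" and x: "x \<in> carrier G" and y: "y \<in> carrier G"
  shows "(\<Sum>s\<in>carrier G. a s * w (g \<otimes> y \<otimes> inv g \<otimes> (inv s \<otimes> x)))
       = (\<Sum>s\<in>carrier G. w (g \<otimes> s \<otimes> inv g \<otimes> x) * a (inv s \<otimes> y))"
proof -
  have "(\<Sum>s\<in>carrier G. a s * w (g \<otimes> y \<otimes> inv g \<otimes> (inv s \<otimes> x)))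
      = (\<Sum>v\<in>carrier G. (\<lambda>s. a s * w (g \<otimes> y \<otimes> inv g \<otimes> (inv s \<otimes> x))) (x \<otimes> inv v \<otimes> g \<otimes> y \<otimes> inv g))"
    by (rule sum_reindex_bij_self[where k="\<lambda>s. g \<otimes> y \<otimes> inv g \<otimes> (inv s \<otimes> x)", symmetric])
      (use g x y in \<open>auto simp: group_simps\<close>)
  also have "\<dots> = (\<Sum>v\<in>carrier G. (\<lambda>s. w (g \<otimes> s \<otimes> inv g \<otimes> x) * a (inv s \<otimes> y)) (inv g \<otimes> v \<otimes> inv x \<otimes> g))"
  proof (intro sum.cong refl)
    fix v assume v: "v \<in> carrier G"
    have "a (g \<otimes> (inv g \<otimes> x \<otimes> inv v \<otimes> g \<otimes> y) \<otimes> inv g) = a (inv g \<otimes> x \<otimes> inv v \<otimes> g \<otimes> y)"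
      using a g x y v by (intro ZL1_conj) auto
    then show "(\<lambda>s. a s * w (g \<otimes> y \<otimes> inv g \<otimes> (inv s \<otimes> x))) (x \<otimes> inv v \<otimes> g \<otimes> y \<otimes> inv g)
        = (\<lambda>s. w (g \<otimes> s \<otimes> inv g \<otimes> x) * a (inv s \<otimes> y)) (inv g \<otimes> v \<otimes> inv x \<otimes> g)"
      using g x y v by (simp add: group_simps)
  qed
  also have "\<dots> = (\<Sum>s\<in>carrier G. w (g \<otimes> s \<otimes> inv g \<otimes> x) * a (inv s \<otimes> y))"
    by (rule sum_reindex_bij_self[where k="\<lambda>s. g \<otimes> s \<otimes> inv g \<otimes> x"])
      (use g x y in \<open>auto simp: group_simps\<close>)
  finally show ?thesis .
qed

lemma conj_tensor_commutes:
  assumes a: "a \<in> ZL1 G"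
  shows "lact G a (conj_tensor G w) z = ract G (conj_tensor G w) a z"
proof -
  obtain x y where z: "z = (x, y)"
    by fastforce
  show ?thesis
  proof (cases "x \<in> carrier G \<and> y \<in> carrier G")
    case True
    then have x: "x \<in> carrier G" and y: "y \<in> carrier G"
      by auto
    have "lact G a (conj_tensor G w) z = (\<Sum>s\<in>carrier G. a s * conj_tensor G w (inv s \<otimes> x, y)) / of_nat n"
      using x by (simp add: z lact_def conv_def)
    also have "\<dots> = (\<Sum>s\<in>carrier G. \<Sum>g\<in>carrier G. a s * w (g \<otimes> y \<otimes> inv g \<otimes> (inv s \<otimes> x))) / (of_nat n)^2"
      using x y by (simp add: conj_tensor_eval sum_distrib_left sum_divide_distrib power2_eq_square)
    also have "\<dots> = (\<Sum>g\<in>carrier G. \<Sum>s\<in>carrier G. a s * w (g \<otimes> y \<otimes> inv g \<otimes> (inv s \<otimes> x))) / (of_nat n)^2"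
      by (subst sum.swap) (rule refl)
    also have "\<dots> = (\<Sum>g\<in>carrier G. \<Sum>s\<in>carrier G. w (g \<otimes> s \<otimes> inv g \<otimes> x) * a (inv s \<otimes> y)) / (of_nat n)^2"
      using a x y by (simp add: conj_tensor_commutes_sum)
    also have "\<dots> = (\<Sum>s\<in>carrier G. \<Sum>g\<in>carrier G. w (g \<otimes> s \<otimes> inv g \<otimes> x) * a (inv s \<otimes> y)) / (of_nat n)^2"
      by (subst sum.swap) (rule refl)
    also have "\<dots> = (\<Sum>s\<in>carrier G. conj_tensor G w (x, s) * a (inv s \<otimes> y)) / of_nat n"
      using x y by (simp add: conj_tensor_eval sum_distrib_right sum_divide_distrib power2_eq_square)
    also have "\<dots> = ract G (conj_tensor G w) a z"
      using y by (simp add: z ract_def conv_def)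
    finally show ?thesis .
  next
    case False
    then show ?thesis
      by (auto simp: z lact_def ract_def conv_def conj_tensor_outside)
  qed
qed

text \<open>Every \<mu> equals P(\<mu>(-, 1)) up to a commutator: the left action of the class sum of
  y\<inverse> on \<mu>(-, 1) gives P, the right action recovers \<mu>(x, y).\<close>

lemma ZL1_tens_decomp:
  assumes mu: "\<mu> \<in> ZL1_tens G" and x: "x \<in> carrier G" and y: "y \<in> carrier G"
  shows "\<mu> (x, y) = conj_tensor G (\<lambda>t. \<mu> (t, \<one>)) (x, y)
     - (lact G (conj_count G (inv y)) \<mu> (x, \<one>) - ract G \<mu> (conj_count G (inv y)) (x, \<one>))"
proof -
  have iy: "inv y \<in> carrier G"
    using y by simp
  have "lact G (conj_count G (inv y)) \<mu> (x, \<one>)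
      = (\<Sum>s\<in>carrier G. conj_count G (inv y) s * \<mu> (inv s \<otimes> x, \<one>)) / of_nat n"
    using x by (simp add: lact_def conv_def)
  also have "\<dots> = (\<Sum>g\<in>carrier G. \<mu> (inv (g \<otimes> inv y \<otimes> inv g) \<otimes> x, \<one>)) / of_nat n"
    using sum_conj_count[OF iy] by simp
  also have "\<dots> = conj_tensor G (\<lambda>t. \<mu> (t, \<one>)) (x, y)"
    using x y by (simp add: conj_tensor_eval group_simps)
  finally have l: "lact G (conj_count G (inv y)) \<mu> (x, \<one>) = conj_tensor G (\<lambda>t. \<mu> (t, \<one>)) (x, y)" .
  have "(\<Sum>s\<in>carrier G. \<mu> (x, s) * conj_count G (inv y) (inv s \<otimes> \<one>))
      = (\<Sum>s\<in>carrier G. \<mu> (x, inv s) * conj_count G (inv y) s)"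
    by (subst sum_inverse[symmetric]) (intro sum.cong refl; simp)
  also have "\<dots> = (\<Sum>g\<in>carrier G. \<mu> (x, inv (g \<otimes> inv y \<otimes> inv g)))"
    using sum_conj_count[OF iy, of "\<lambda>s. \<mu> (x, inv s)"] by (simp add: mult.commute)
  also have "\<dots> = (\<Sum>g\<in>carrier G. \<mu> (x, y))"
  proof (intro sum.cong refl)
    fix g assume g: "g \<in> carrier G"
    have "inv (g \<otimes> inv y \<otimes> inv g) = g \<otimes> y \<otimes> inv g"
      using g y by (simp add: group_simps)
    then show "\<mu> (x, inv (g \<otimes> inv y \<otimes> inv g)) = \<mu> (x, y)"
      using ZL1_conj[OF ZL1_tens_slice_snd[OF mu] y g] by simp
  qed
  finally have r: "ract G \<mu> (conj_count G (inv y)) (x, \<one>) = \<mu> (x, y)"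
    using of_nat_n_nonzero by (simp add: ract_def conv_def)
  show ?thesis
    using l r by simp
qed

lemma conj_op_eval:
  assumes "t \<in> carrier G"
  shows "conj_op G h t = (\<Sum>s\<in>carrier G. \<Sum>g\<in>carrier G. h (g \<otimes> (inv s \<otimes> t) \<otimes> inv g \<otimes> s)) / (of_nat n)^2"
  using assms by (simp add: conj_op_def mtens_def conj_tensor_eval sum_divide_distrib power2_eq_square)

lemma conj_op_outside: "t \<notin> carrier G \<Longrightarrow> conj_op G h t = 0"
  by (simp add: conj_op_def mtens_def)

lemma conj_op_ZL1: "h \<in> ZL1 G \<Longrightarrow> conj_op G h \<in> ZL1 G"
  unfolding conj_op_def by (intro mtens_ZL1 conj_tensor_ZL1_tens)

lemma conj_op_zero: "conj_op G (\<lambda>t. 0) t = 0"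
  by (cases "t \<in> carrier G") (simp_all add: conj_op_eval conj_op_outside)

lemma conj_op_diff: "conj_op G (\<lambda>t. f t - g t) t = conj_op G f t - conj_op G g t"
  by (cases "t \<in> carrier G") (simp_all add: conj_op_eval conj_op_outside sum_subtractf diff_divide_distrib)

lemma conj_op_lincomb: "conj_op G (\<lambda>t. \<Sum>c\<in>A. a c * W c t) t = (\<Sum>c\<in>A. a c * conj_op G (W c) t)"
  by (cases "t \<in> carrier G")
    (simp_all add: conj_op_eval conj_op_outside sum_distrib_left sum_divide_distrib sum.swap[of _ A] mult_ac)

lemma conj_op_linear:
  "Vector_Spaces.linear (\<lambda>(c::complex) (f::'a \<Rightarrow> complex). (\<lambda>x. c * f x))
     (\<lambda>(c::complex) (f::'a \<Rightarrow> complex). (\<lambda>x. c * f x)) (conj_op G)"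
proof unfold_locales
  fix f g :: "'a \<Rightarrow> complex" and c :: complex
  show "conj_op G (f + g) = conj_op G f + conj_op G g"
  proof
    fix t show "conj_op G (f + g) t = (conj_op G f + conj_op G g) t"
      by (cases "t \<in> carrier G") (simp_all add: conj_op_eval conj_op_outside sum.distrib add_divide_distrib)
  qed
  show "conj_op G (\<lambda>x. c * f x) = (\<lambda>x. c * conj_op G f x)"
  proof
    fix t show "conj_op G (\<lambda>x. c * f x) t = c * conj_op G f t"
      by (cases "t \<in> carrier G") (simp_all add: conj_op_eval conj_op_outside sum_distrib_left)
  qed
qed

end

section \<open>Invertibility of Z\<close>

definition conj_op_form :: "('a, 'b) monoid_scheme \<Rightarrow> ('a \<Rightarrow> complex) \<Rightarrow> complex" where
  "conj_op_form G h = (\<Sum>t\<in>carrier G. conj_op G h t * cnj (h t))"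

context finite_group begin

lemma sum_conj_orbit_sq:
  "(\<Sum>r\<in>carrier G. \<Sum>g\<in>carrier G. F (g \<otimes> r \<otimes> inv g) * cnj (F r)) * of_nat n
   = (\<Sum>r\<in>carrier G. (\<Sum>g\<in>carrier G. F (g \<otimes> r \<otimes> inv g)) * cnj (\<Sum>k\<in>carrier G. F (k \<otimes> r \<otimes> inv k)))"
proof -
  have "(\<Sum>r\<in>carrier G. (\<Sum>g\<in>carrier G. F (g \<otimes> r \<otimes> inv g)) * cnj (\<Sum>k\<in>carrier G. F (k \<otimes> r \<otimes> inv k)))
      = (\<Sum>r\<in>carrier G. \<Sum>k\<in>carrier G. \<Sum>g\<in>carrier G. F (g \<otimes> r \<otimes> inv g) * cnj (F (k \<otimes> r \<otimes> inv k)))"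
    by (simp add: sum_distrib_left sum_distrib_right mult_ac)
  also have "\<dots> = (\<Sum>k\<in>carrier G. \<Sum>r\<in>carrier G. \<Sum>g\<in>carrier G. F (g \<otimes> r \<otimes> inv g) * cnj (F (k \<otimes> r \<otimes> inv k)))"
    by (rule sum.swap)
  also have "\<dots> = (\<Sum>k\<in>carrier G. \<Sum>r\<in>carrier G. \<Sum>g\<in>carrier G. F (g \<otimes> r \<otimes> inv g) * cnj (F r))"
  proof (rule sum.cong[OF refl])
    fix k assume k: "k \<in> carrier G"
    have "(\<Sum>r\<in>carrier G. \<Sum>g\<in>carrier G. F (g \<otimes> r \<otimes> inv g) * cnj (F (k \<otimes> r \<otimes> inv k)))
        = (\<Sum>r\<in>carrier G. \<Sum>g\<in>carrier G. F ((g \<otimes> inv k) \<otimes> r \<otimes> inv (g \<otimes> inv k)) * cnj (F r))"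
      using k by (subst sum_conj[of "inv k", symmetric]) (auto intro!: sum.cong simp: group_simps)
    also have "\<dots> = (\<Sum>r\<in>carrier G. \<Sum>g\<in>carrier G. F (g \<otimes> r \<otimes> inv g) * cnj (F r))"
      using k by (intro sum.cong refl sum_right_translate[where f="\<lambda>g. F (g \<otimes> _ \<otimes> inv g) * _"]) auto
    finally show "(\<Sum>r\<in>carrier G. \<Sum>g\<in>carrier G. F (g \<otimes> r \<otimes> inv g) * cnj (F (k \<otimes> r \<otimes> inv k)))
        = (\<Sum>r\<in>carrier G. \<Sum>g\<in>carrier G. F (g \<otimes> r \<otimes> inv g) * cnj (F r))" .
  qed
  finally show ?thesis
    by simp
qed

lemma conj_op_form_sum_sq:
  assumes h: "h \<in> ZL1 G"
  shows "conj_op_form G h * (of_nat n)^3 = (\<Sum>s\<in>carrier G. \<Sum>r\<in>carrier G.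
      (\<Sum>g\<in>carrier G. h (g \<otimes> r \<otimes> inv g \<otimes> s)) * cnj (\<Sum>k\<in>carrier G. h (k \<otimes> r \<otimes> inv k \<otimes> s)))"
proof -
  have "conj_op_form G h * (of_nat n)^2
      = (\<Sum>t\<in>carrier G. \<Sum>s\<in>carrier G. \<Sum>g\<in>carrier G. h (g \<otimes> (inv s \<otimes> t) \<otimes> inv g \<otimes> s) * cnj (h t))"
    using of_nat_n_nonzero by (simp add: conj_op_form_def conj_op_eval sum_distrib_right sum_divide_distrib)
  also have "\<dots> = (\<Sum>s\<in>carrier G. \<Sum>t\<in>carrier G. \<Sum>g\<in>carrier G. h (g \<otimes> (inv s \<otimes> t) \<otimes> inv g \<otimes> s) * cnj (h t))"
    by (rule sum.swap)
  also have "\<dots> = (\<Sum>s\<in>carrier G. \<Sum>r\<in>carrier G. \<Sum>g\<in>carrier G. h (g \<otimes> r \<otimes> inv g \<otimes> s) * cnj (h (r \<otimes> s)))"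
  proof (rule sum.cong[OF refl])
    fix s assume s: "s \<in> carrier G"
    show "(\<Sum>t\<in>carrier G. \<Sum>g\<in>carrier G. h (g \<otimes> (inv s \<otimes> t) \<otimes> inv g \<otimes> s) * cnj (h t))
      = (\<Sum>r\<in>carrier G. \<Sum>g\<in>carrier G. h (g \<otimes> r \<otimes> inv g \<otimes> s) * cnj (h (r \<otimes> s)))"
      using s ZL1_commute[OF h s]
      by (subst sum_left_translate[of s, symmetric]) (auto intro!: sum.cong simp: group_simps)
  qed
  finally have sq: "conj_op_form G h * (of_nat n)^2
      = (\<Sum>s\<in>carrier G. \<Sum>r\<in>carrier G. \<Sum>g\<in>carrier G. h (g \<otimes> r \<otimes> inv g \<otimes> s) * cnj (h (r \<otimes> s)))" .
  have "conj_op_form G h * (of_nat n)^3 = conj_op_form G h * (of_nat n)^2 * of_nat n"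
    by (simp add: power3_eq_cube power2_eq_square)
  also have "\<dots> = (\<Sum>s\<in>carrier G.
      (\<Sum>r\<in>carrier G. \<Sum>g\<in>carrier G. h (g \<otimes> r \<otimes> inv g \<otimes> s) * cnj (h (r \<otimes> s))) * of_nat n)"
    unfolding sq by (simp add: sum_distrib_right)
  also have "\<dots> = (\<Sum>s\<in>carrier G. \<Sum>r\<in>carrier G.
      (\<Sum>g\<in>carrier G. h (g \<otimes> r \<otimes> inv g \<otimes> s)) * cnj (\<Sum>k\<in>carrier G. h (k \<otimes> r \<otimes> inv k \<otimes> s)))"
    using sum_conj_orbit_sq[of "\<lambda>v. h (v \<otimes> _)"] by simp
  finally show ?thesis .
qed

lemma conj_op_form_nonneg_real:
  assumes h: "h \<in> ZL1 G"
  obtains q where "conj_op_form G h = of_real q" "q \<ge> 0" "q = 0 \<Longrightarrow> h = (\<lambda>t. 0)"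
proof -
  define A where "A s r = (\<Sum>g\<in>carrier G. h (g \<otimes> r \<otimes> inv g \<otimes> s))" for s r
  define q where "q = (\<Sum>s\<in>carrier G. \<Sum>r\<in>carrier G. (cmod (A s r))^2) / (real n)^3"
  have "conj_op_form G h * (of_nat n)^3 = (\<Sum>s\<in>carrier G. \<Sum>r\<in>carrier G. of_real ((cmod (A s r))^2))"
    unfolding conj_op_form_sum_sq[OF h] A_def complex_norm_square ..
  then have Q: "conj_op_form G h = of_real q"
    using of_nat_n_nonzero by (simp add: q_def field_simps)
  have q0: "q \<ge> 0"
    by (simp add: q_def sum_nonneg)
  have zero: "h = (\<lambda>t. 0)" if "q = 0"
  proof
    fix t show "h t = 0"
    proof (cases "t \<in> carrier G")
      case True
      have "(\<Sum>s\<in>carrier G. \<Sum>r\<in>carrier G. (cmod (A s r))^2) = 0"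
        using that n_pos by (simp add: q_def)
      then have "(cmod (A t \<one>))^2 = 0"
        using finite_carrier True by (simp add: sum_nonneg_eq_0_iff sum_nonneg)
      moreover have "A t \<one> = of_nat n * h t"
        using True by (simp add: A_def group_simps)
      ultimately show ?thesis
        using of_nat_n_nonzero by simp
    next
      case False
      then show ?thesis
        using h by (simp add: ZL1_outside)
    qed
  qed
  from Q q0 zero show ?thesis
    by (rule that)
qed

lemma conj_op_inj_on: "inj_on (conj_op G) (ZL1 G)"
proof (rule inj_onI)
  fix f g assume f: "f \<in> ZL1 G" and g: "g \<in> ZL1 G" and eq: "conj_op G f = conj_op G g"
  have d: "(\<lambda>t. f t - g t) \<in> ZL1 G"
    using f g by (rule ZL1_diff)
  obtain q where q: "conj_op_form G (\<lambda>t. f t - g t) = of_real q" "q = 0 \<Longrightarrow> (\<lambda>t. f t - g t) = (\<lambda>t. 0)"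
    using conj_op_form_nonneg_real[OF d] by blast
  have "conj_op_form G (\<lambda>t. f t - g t) = 0"
    using eq by (simp add: conj_op_form_def conj_op_diff)
  then show "f = g"
    using q by (auto simp: fun_eq_iff dest: fun_cong)
qed

lemma conj_op_image: "conj_op G ` ZL1 G = ZL1 G"
proof -
  have "conj_op G ` fun_vs.span (conj_count G ` carrier G) = fun_vs.span (conj_count G ` carrier G)"
    by (rule fun_vs.linear_inj_on_span_imp_onto[OF conj_op_linear])
      (use finite_carrier conj_op_ZL1 conj_op_inj_on in \<open>auto simp: ZL1_span_conj_count[symmetric]\<close>)
  then show ?thesis
    by (simp add: ZL1_span_conj_count[symmetric])
qed

lemma conj_op_surj:
  assumes "b \<in> ZL1 G"
  obtains h where "h \<in> ZL1 G" "conj_op G h = b"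
  using assms conj_op_image by (metis imageE)

lemma conj_op_slice_triple_sum:
  assumes x: "x \<in> carrier G" and t: "t \<in> carrier G"
  shows "conj_op G (\<lambda>y. conj_tensor G w (x, y)) t * (of_nat n)^3
      = (\<Sum>(s, g, k)\<in>carrier G \<times> carrier G \<times> carrier G.
           w (k \<otimes> (g \<otimes> (inv s \<otimes> t) \<otimes> inv g \<otimes> s) \<otimes> inv k \<otimes> x))"
proof -
  have "conj_op G (\<lambda>y. conj_tensor G w (x, y)) t * (of_nat n)^3
      = (\<Sum>s\<in>carrier G. \<Sum>g\<in>carrier G. \<Sum>k\<in>carrier G. w (k \<otimes> (g \<otimes> (inv s \<otimes> t) \<otimes> inv g \<otimes> s) \<otimes> inv k \<otimes> x))"
    using t x of_nat_n_nonzero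
    by (simp add: conj_op_eval conj_tensor_eval sum_divide_distrib[symmetric] power3_eq_cube power2_eq_square)
  then show ?thesis
    by (simp add: sum.cartesian_product)
qed

lemma conj_count_triple_sum:
  assumes w: "conj_op G w = L1_unit G" and x: "x \<in> carrier G" and t: "t \<in> carrier G"
  shows "conj_count G (inv x) t * (of_nat n)^3
      = (\<Sum>(s, g, k)\<in>carrier G \<times> carrier G \<times> carrier G.
           w (g \<otimes> (inv s \<otimes> (inv k \<otimes> t \<otimes> k \<otimes> x)) \<otimes> inv g \<otimes> s))"
proof -
  have "(k \<otimes> inv x \<otimes> inv k = t) = (inv k \<otimes> t \<otimes> k \<otimes> x = \<one>)" if k: "k \<in> carrier G" for k
  proof
    assume "k \<otimes> inv x \<otimes> inv k = t"
    then show "inv k \<otimes> t \<otimes> k \<otimes> x = \<one>"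
      using k x by (auto simp: group_simps)
  next
    assume "inv k \<otimes> t \<otimes> k \<otimes> x = \<one>"
    then have "k \<otimes> (inv k \<otimes> t \<otimes> k \<otimes> x) \<otimes> inv x \<otimes> inv k = k \<otimes> \<one> \<otimes> inv x \<otimes> inv k"
      by simp
    then show "k \<otimes> inv x \<otimes> inv k = t"
      using k x t by (simp add: group_simps)
  qed
  note iff = this
  have "conj_count G (inv x) t * (of_nat n)^3
      = (\<Sum>k\<in>carrier G. (if k \<otimes> inv x \<otimes> inv k = t then 1 else 0) * (of_nat n)^3)"
    using t by (simp add: conj_count_def sum_distrib_right)
  also have "\<dots> = (\<Sum>k\<in>carrier G. L1_unit G (inv k \<otimes> t \<otimes> k \<otimes> x) * (of_nat n)^2)"
    using iff by (intro sum.cong refl) (simp add: L1_unit_def power3_eq_cube power2_eq_square)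
  also have "\<dots> = (\<Sum>k\<in>carrier G. conj_op G w (inv k \<otimes> t \<otimes> k \<otimes> x) * (of_nat n)^2)"
    using w by simp
  also have "\<dots> = (\<Sum>k\<in>carrier G. \<Sum>s\<in>carrier G. \<Sum>g\<in>carrier G.
      w (g \<otimes> (inv s \<otimes> (inv k \<otimes> t \<otimes> k \<otimes> x)) \<otimes> inv g \<otimes> s))"
    using t x of_nat_n_nonzero by (intro sum.cong refl) (simp add: conj_op_eval)
  also have "\<dots> = (\<Sum>s\<in>carrier G. \<Sum>k\<in>carrier G. \<Sum>g\<in>carrier G.
      w (g \<otimes> (inv s \<otimes> (inv k \<otimes> t \<otimes> k \<otimes> x)) \<otimes> inv g \<otimes> s))"
    by (rule sum.swap)
  also have "\<dots> = (\<Sum>s\<in>carrier G. \<Sum>g\<in>carrier G. \<Sum>k\<in>carrier G.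
      w (g \<otimes> (inv s \<otimes> (inv k \<otimes> t \<otimes> k \<otimes> x)) \<otimes> inv g \<otimes> s))"
    by (intro sum.cong refl sum.swap)
  finally show ?thesis
    by (simp add: sum.cartesian_product)
qed

text \<open>With k' = g\<inverse> s k\<inverse>, s' = k'\<inverse> s k' and g' = k'\<inverse> g k', the argument at (s', g', k') of
  the second sum is a conjugate of the argument at (s, g, k) of the first.\<close>

lemma triple_sum_conj_reindex:
  assumes w: "w \<in> ZL1 G" and x: "x \<in> carrier G" and t: "t \<in> carrier G"
  shows "(\<Sum>(s, g, k)\<in>carrier G \<times> carrier G \<times> carrier G.
            w (g \<otimes> (inv s \<otimes> (inv k \<otimes> t \<otimes> k \<otimes> x)) \<otimes> inv g \<otimes> s))
       = (\<Sum>(s, g, k)\<in>carrier G \<times> carrier G \<times> carrier G.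
            w (k \<otimes> (g \<otimes> (inv s \<otimes> t) \<otimes> inv g \<otimes> s) \<otimes> inv k \<otimes> x))"
    (is "sum ?B ?S3 = sum ?A ?S3")
proof -
  define \<phi> where "\<phi> = (\<lambda>(s, g, k). let k' = inv g \<otimes> s \<otimes> inv k in (inv k' \<otimes> s \<otimes> k', inv k' \<otimes> g \<otimes> k', k'))"
  define \<psi> where "\<psi> = (\<lambda>(s', g', k'). (k' \<otimes> s' \<otimes> inv k', k' \<otimes> g' \<otimes> inv k', inv g' \<otimes> s' \<otimes> inv k'))"
  have "sum ?B ?S3 = sum (\<lambda>p. ?B (\<phi> p)) ?S3"
  proof (rule sum_reindex_bij_self[where k=\<psi>, symmetric])
    fix p assume "p \<in> ?S3"
    then obtain s g k where p: "p = (s, g, k)" and "s \<in> carrier G" "g \<in> carrier G" "k \<in> carrier G"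
      by auto
    then show "\<phi> p \<in> ?S3" "\<psi> p \<in> ?S3" "\<psi> (\<phi> p) = p" "\<phi> (\<psi> p) = p"
      by (simp_all add: \<phi>_def \<psi>_def Let_def group_simps)
  qed
  also have "\<dots> = sum ?A ?S3"
  proof (rule sum.cong[OF refl])
    fix p assume "p \<in> ?S3"
    then obtain s g k where p: "p = (s, g, k)" and s: "s \<in> carrier G" and g: "g \<in> carrier G"
      and k: "k \<in> carrier G"
      by auto
    define k' where "k' = inv g \<otimes> s \<otimes> inv k"
    define g' where "g' = inv k' \<otimes> g \<otimes> k'"
    define s' where "s' = inv k' \<otimes> s \<otimes> k'"
    define c where "c = inv (k' \<otimes> x \<otimes> inv g' \<otimes> s') \<otimes> (inv g \<otimes> s \<otimes> inv k \<otimes> x)"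
    have "g' \<otimes> (inv s' \<otimes> (inv k' \<otimes> t \<otimes> k' \<otimes> x)) \<otimes> inv g' \<otimes> s'
        = c \<otimes> (k \<otimes> (g \<otimes> (inv s \<otimes> t) \<otimes> inv g \<otimes> s) \<otimes> inv k \<otimes> x) \<otimes> inv c"
      unfolding c_def g'_def s'_def k'_def using s g k x t by (simp add: group_simps)
    moreover have "c \<in> carrier G"
      using s g k x by (simp add: c_def g'_def s'_def k'_def)
    moreover have "\<phi> p = (s', g', k')"
      by (simp add: p \<phi>_def Let_def k'_def g'_def s'_def)
    ultimately show "?B (\<phi> p) = ?A p"
      using ZL1_conj[OF w] s g k x t by (simp add: p)
  qed
  finally show ?thesis .
qed

lemma conj_op_diagonal_slice:
  assumes w: "w \<in> ZL1 G" "conj_op G w = L1_unit G" and x: "x \<in> carrier G"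
  shows "conj_op G (\<lambda>y. conj_tensor G w (x, y)) = conj_count G (inv x)"
proof
  fix t show "conj_op G (\<lambda>y. conj_tensor G w (x, y)) t = conj_count G (inv x) t"
  proof (cases "t \<in> carrier G")
    case True
    have "conj_op G (\<lambda>y. conj_tensor G w (x, y)) t * (of_nat n)^3 = conj_count G (inv x) t * (of_nat n)^3"
      unfolding conj_op_slice_triple_sum[OF x True] conj_count_triple_sum[OF w(2) x True]
        triple_sum_conj_reindex[OF w(1) x True] ..
    then show ?thesis
      using of_nat_n_nonzero by simp
  next
    case False
    then show ?thesis
      by (simp add: conj_op_outside conj_count_def)
  qed
qed

text \<open>For the slice d = P w (x, -) the form \<langle>Z d, d\<rangle> equals |G| times the conjugate of
  d(x\<inverse>), because Z d is the class count of x\<inverse>; its positivity makes P w (x, x\<inverse>) positive.\<close>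

lemma conj_tensor_antidiag_pos:
  assumes w: "w \<in> ZL1 G" "conj_op G w = L1_unit G" and x: "x \<in> carrier G"
  shows "conj_tensor G w (x, inv x) = of_real (Re (conj_tensor G w (x, inv x)))"
    and "Re (conj_tensor G w (x, inv x)) > 0"
proof -
  let ?d = "\<lambda>y. conj_tensor G w (x, y)"
  obtain q where q: "conj_op_form G ?d = of_real q" "q \<ge> 0" "q = 0 \<Longrightarrow> ?d = (\<lambda>t. 0)"
    using conj_op_form_nonneg_real[OF conj_tensor_slice_snd] by blast
  have "conj_op_form G ?d = (\<Sum>t\<in>carrier G. conj_count G (inv x) t * cnj (?d t))"
    by (simp add: conj_op_form_def conj_op_diagonal_slice[OF w x])
  also have "\<dots> = (\<Sum>g\<in>carrier G. cnj (?d (g \<otimes> inv x \<otimes> inv g)))"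
    using x by (intro sum_conj_count) simp
  also have "\<dots> = of_nat n * cnj (?d (inv x))"
    using x by (simp add: conj_tensor_conj_snd)
  finally have "cnj (?d (inv x)) = of_real (q / real n)"
    using q(1) of_nat_n_nonzero by (simp add: field_simps)
  then have "?d (inv x) = of_real (q / real n)"
    by (metis complex_cnj_cnj complex_cnj_complex_of_real)
  moreover have "q \<noteq> 0"
  proof
    assume "q = 0"
    then have "conj_op G ?d (inv x) = 0"
      using q(3) conj_op_zero by simp
    then show False
      using conj_op_diagonal_slice[OF w x] conj_count_self_nonzero[of "inv x"] x by simp
  qed
  ultimately show "conj_tensor G w (x, inv x) = of_real (Re (conj_tensor G w (x, inv x)))"
    and "Re (conj_tensor G w (x, inv x)) > 0"
    using q(2) n_pos by simp_all
qed

lemma sum_conj_tensor_antidiag: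
  assumes "conj_op G w = L1_unit G"
  shows "(\<Sum>x\<in>carrier G. conj_tensor G w (x, inv x)) = (of_nat n)^2"
proof -
  have "mtens G (conj_tensor G w) \<one> = L1_unit G \<one>"
    using assms by (simp add: conj_op_def)
  then show ?thesis
    using of_nat_n_nonzero by (simp add: mtens_def L1_unit_def field_simps power2_eq_square)
qed

end

section \<open>The functional T\<close>

definition inv_conj :: "('a, 'b) monoid_scheme \<Rightarrow> 'a \<Rightarrow> 'a \<Rightarrow> bool" where
  "inv_conj G x y \<longleftrightarrow> (\<exists>k\<in>carrier G. k \<otimes>\<^bsub>G\<^esub> inv\<^bsub>G\<^esub> x \<otimes>\<^bsub>G\<^esub> inv\<^bsub>G\<^esub> k = y)"

definition inv_class_avg :: "('a, 'b) monoid_scheme \<Rightarrow> ('a \<times> 'a \<Rightarrow> complex) \<Rightarrow> complex" where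
  "inv_class_avg G \<mu> = (\<Sum>x\<in>carrier G. \<Sum>y\<in>carrier G. of_bool (inv_conj G x y) * \<mu> (x, y))
     / (of_nat (card (carrier G)))^2"

context finite_group begin

lemma inv_class_avg_diff: "inv_class_avg G (\<lambda>z. M z - N z) = inv_class_avg G M - inv_class_avg G N"
  by (simp add: inv_class_avg_def right_diff_distrib sum_subtractf diff_divide_distrib)

lemma inv_class_avg_lincomb:
  "inv_class_avg G (\<lambda>z. \<Sum>c\<in>A. a c * M c z) = (\<Sum>c\<in>A. a c * inv_class_avg G (M c))"
  by (simp add: inv_class_avg_def sum_distrib_left sum_divide_distrib mult.left_commute
      sum.swap[of _ "carrier G" A])

lemma inv_class_avg_le_projnorm: "\<mu> \<in> ZL1_tens G \<Longrightarrow> cmod (inv_class_avg G \<mu>) \<le> projnorm G \<mu>"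
  unfolding inv_class_avg_def by (rule projnorm_ge_functional) auto

lemma inv_class_avg_norm_le:
  assumes "\<And>z. cmod (F z) \<le> B"
  shows "cmod (inv_class_avg G F) \<le> B"
proof -
  have "cmod (\<Sum>x\<in>carrier G. \<Sum>y\<in>carrier G. of_bool (inv_conj G x y) * F (x, y))
      \<le> (\<Sum>x\<in>carrier G. \<Sum>y\<in>carrier G. B)"
    by (rule order_trans[OF norm_sum sum_mono], rule order_trans[OF norm_sum sum_mono])
      (simp add: norm_mult assms order_trans[OF norm_ge_zero assms])
  then show ?thesis
    using n_pos by (simp add: inv_class_avg_def norm_divide norm_power norm_mult field_simps power2_eq_square)
qed

definition inv_class :: "'a \<Rightarrow> 'a set" where
  "inv_class x = {y \<in> carrier G. inv_conj G x y}"

lemma inv_class_finite: "finite (inv_class x)"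
  using finite_carrier by (simp add: inv_class_def)

lemma inv_mem_inv_class: "x \<in> carrier G \<Longrightarrow> inv x \<in> inv_class x"
  by (auto simp: inv_class_def inv_conj_def intro!: bexI[of _ \<one>])

lemma card_inv_class_pos: "x \<in> carrier G \<Longrightarrow> card (inv_class x) \<ge> 1"
  using inv_mem_inv_class inv_class_finite by (metis One_nat_def Suc_leI card_gt_0_iff empty_iff)

lemma card_inv_class_ge2:
  assumes a: "a \<in> carrier G" and b: "b \<in> carrier G" and ab: "a \<otimes> b \<noteq> b \<otimes> a"
  shows "card (inv_class a) \<ge> 2"
proof -
  have "b \<otimes> inv a \<otimes> inv b \<noteq> inv a"
  proof
    assume "b \<otimes> inv a \<otimes> inv b = inv a"
    then have "inv (b \<otimes> inv a \<otimes> inv b) = inv (inv a)"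
      by simp
    then have "b \<otimes> a \<otimes> inv b = a"
      using a b by (simp add: group_simps)
    then have "(b \<otimes> a \<otimes> inv b) \<otimes> b = a \<otimes> b"
      by simp
    then show False
      using a b ab by (simp add: group_simps)
  qed
  moreover have "b \<otimes> inv a \<otimes> inv b \<in> inv_class a"
    using a b by (auto simp: inv_class_def inv_conj_def intro!: bexI[of _ b])
  ultimately have "card {inv a, b \<otimes> inv a \<otimes> inv b} \<le> card (inv_class a)"
    using inv_mem_inv_class[OF a] by (intro card_mono inv_class_finite) auto
  moreover have "card {inv a, b \<otimes> inv a \<otimes> inv b} = 2"
    using \<open>b \<otimes> inv a \<otimes> inv b \<noteq> inv a\<close> by simp
  ultimately show ?thesis
    by simp
qed

lemma inv_class_avg_conj_tensor:
  "inv_class_avg G (conj_tensor G h) * (of_nat n)^2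
     = (\<Sum>x\<in>carrier G. of_nat (card (inv_class x)) * conj_tensor G h (x, inv x))"
proof -
  have "(\<Sum>y\<in>carrier G. of_bool (inv_conj G x y) * conj_tensor G h (x, y))
      = of_nat (card (inv_class x)) * conj_tensor G h (x, inv x)" if x: "x \<in> carrier G" for x
  proof -
    have "(\<Sum>y\<in>carrier G. of_bool (inv_conj G x y) * conj_tensor G h (x, y))
        = (\<Sum>y\<in>inv_class x. conj_tensor G h (x, y))"
      using finite_carrier by (simp add: inv_class_def Collect_conj_eq Int_commute)
    also have "\<dots> = (\<Sum>y\<in>inv_class x. conj_tensor G h (x, inv x))"
      using x by (intro sum.cong refl) (auto simp: inv_class_def inv_conj_def conj_tensor_conj_snd)
    finally show ?thesis
      by simp
  qed
  then show ?thesis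
    using of_nat_n_nonzero by (simp add: inv_class_avg_def)
qed

text \<open>Writing r x for the positive numbers P w (x, x\<inverse>), which sum to |G|^2, we get
  |G|^2 T(P w) = \<Sum> |inv_class x| r x \<ge> |G|^2 + r a for a non-central a.\<close>

lemma inv_class_avg_diagonal_gt1:
  assumes w: "w \<in> ZL1 G" "conj_op G w = L1_unit G" and nc: "\<not> comm_group G"
  shows "Re (inv_class_avg G (conj_tensor G w)) > 1"
proof -
  obtain a b where a: "a \<in> carrier G" and b: "b \<in> carrier G" and ab: "a \<otimes> b \<noteq> b \<otimes> a"
    using nc group_comm_groupI by blast
  define r where "r x = Re (conj_tensor G w (x, inv x))" for x
  have r_eq: "conj_tensor G w (x, inv x) = of_real (r x)" if "x \<in> carrier G" for x
    using conj_tensor_antidiag_pos(1)[OF w that] by (simp add: r_def)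
  have r_pos: "r x > 0" if "x \<in> carrier G" for x
    using conj_tensor_antidiag_pos(2)[OF w that] by (simp add: r_def)
  have "of_real (\<Sum>x\<in>carrier G. r x) = (of_real ((real n)^2) :: complex)"
    using sum_conj_tensor_antidiag[OF w(2)] r_eq by simp
  then have r_sum: "(\<Sum>x\<in>carrier G. r x) = (real n)^2"
    by (simp only: of_real_eq_iff)
  have "Re (inv_class_avg G (conj_tensor G w)) * (real n)^2 = (\<Sum>x\<in>carrier G. real (card (inv_class x)) * r x)"
    using arg_cong[OF inv_class_avg_conj_tensor, of Re] by (simp add: r_eq)
  also have "\<dots> = (\<Sum>x\<in>carrier G. r x) + (\<Sum>x\<in>carrier G. (real (card (inv_class x)) - 1) * r x)"
    by (simp add: sum.distrib[symmetric] algebra_simps)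
  also have "(\<Sum>x\<in>carrier G. (real (card (inv_class x)) - 1) * r x) \<ge> (real (card (inv_class a)) - 1) * r a"
    using a finite_carrier card_inv_class_pos r_pos
    by (intro member_le_sum) (auto intro!: mult_nonneg_nonneg simp: less_imp_le)
  moreover have "(real (card (inv_class a)) - 1) * r a \<ge> r a"
    using card_inv_class_ge2[OF a b ab] r_pos[OF a] by (simp add: algebra_simps)
  ultimately have "Re (inv_class_avg G (conj_tensor G w)) * (real n)^2 > (real n)^2"
    using r_sum r_pos[OF a] by linarith
  then show ?thesis
    using n_pos by simp
qed

end

section \<open>Approximate diagonals\<close>

definition diag_defect :: "('a, 'b) monoid_scheme \<Rightarrow> ('a \<times> 'a \<Rightarrow> complex) \<Rightarrow> real" where
  "diag_defect G \<mu> =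
     (\<Sum>c\<in>carrier G. projnorm G (\<lambda>z. lact G (conj_count G c) \<mu> z - ract G \<mu> (conj_count G c) z))
     + l1norm G (\<lambda>t. mtens G \<mu> t - L1_unit G t)"

context finite_group begin

lemma conj_op_class_count_preimages:
  obtains W where "\<And>c. c \<in> carrier G \<Longrightarrow> W c \<in> ZL1 G"
    and "\<And>c. c \<in> carrier G \<Longrightarrow> conj_op G (W c) = (\<lambda>x. conj_count G c x / of_nat n)"
proof -
  define W where "W c = (SOME V. V \<in> ZL1 G \<and> conj_op G V = (\<lambda>x. conj_count G c x / of_nat n))" for c
  have W_spec: "W c \<in> ZL1 G \<and> conj_op G (W c) = (\<lambda>x. conj_count G c x / of_nat n)"
    if c: "c \<in> carrier G" for c
  proof -
    obtain V where "V \<in> ZL1 G" "conj_op G V = (\<lambda>x. conj_count G c x / of_nat n)"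
      using conj_op_surj[OF ZL1_divide[OF conj_count_ZL1[OF c]]] .
    then have "\<exists>V. V \<in> ZL1 G \<and> conj_op G V = (\<lambda>x. conj_count G c x / of_nat n)"
      by blast
    then show ?thesis
      unfolding W_def by (rule someI_ex)
  qed
  show ?thesis
    by (rule that[of W]) (simp_all add: W_spec)
qed

lemma ZL1_expansion_conj_op:
  assumes W: "\<And>c. c \<in> carrier G \<Longrightarrow> W c \<in> ZL1 G"
      "\<And>c. c \<in> carrier G \<Longrightarrow> conj_op G (W c) = (\<lambda>x. conj_count G c x / of_nat n)"
    and d: "\<delta> \<in> ZL1 G"
  shows "(\<lambda>t. \<Sum>c\<in>carrier G. conj_op G \<delta> c * W c t) = \<delta>"
proof (rule inj_onD[OF conj_op_inj_on])
  show "(\<lambda>t. \<Sum>c\<in>carrier G. conj_op G \<delta> c * W c t) \<in> ZL1 G"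
    using W(1) by (rule ZL1_lincomb)
  show "\<delta> \<in> ZL1 G"
    by (fact d)
  show "conj_op G (\<lambda>t. \<Sum>c\<in>carrier G. conj_op G \<delta> c * W c t) = conj_op G \<delta>"
  proof
    fix t
    show "conj_op G (\<lambda>t. \<Sum>c\<in>carrier G. conj_op G \<delta> c * W c t) t = conj_op G \<delta> t"
    proof (cases "t \<in> carrier G")
      case True
      have "conj_op G (\<lambda>t. \<Sum>c\<in>carrier G. conj_op G \<delta> c * W c t) t
          = (\<Sum>c\<in>carrier G. conj_count G c t * conj_op G \<delta> c) / of_nat n"
        unfolding conj_op_lincomb using W(2) by (simp add: sum_divide_distrib mult_ac)
      then show ?thesis
        using class_function_expansion[OF conj_op_ZL1[OF d] True] of_nat_n_nonzero by simp
    next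
      case False
      then show ?thesis
        by (simp add: conj_op_outside)
    qed
  qed
qed

lemma inv_class_avg_conj_tensor_factors:
  obtains \<sigma> where "\<And>\<delta>. \<delta> \<in> ZL1 G \<Longrightarrow>
    inv_class_avg G (conj_tensor G \<delta>) = (\<Sum>c\<in>carrier G. conj_op G \<delta> c * \<sigma> c)"
proof -
  obtain W where W: "\<And>c. c \<in> carrier G \<Longrightarrow> W c \<in> ZL1 G"
      "\<And>c. c \<in> carrier G \<Longrightarrow> conj_op G (W c) = (\<lambda>x. conj_count G c x / of_nat n)"
    by (rule conj_op_class_count_preimages) blast
  have "inv_class_avg G (conj_tensor G \<delta>)
      = (\<Sum>c\<in>carrier G. conj_op G \<delta> c * inv_class_avg G (conj_tensor G (W c)))"
    if d: "\<delta> \<in> ZL1 G" for \<delta>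
  proof -
    have "inv_class_avg G (conj_tensor G \<delta>)
        = inv_class_avg G (conj_tensor G (\<lambda>t. \<Sum>c\<in>carrier G. conj_op G \<delta> c * W c t))"
      using ZL1_expansion_conj_op[OF W d] by simp
    also have "\<dots> = inv_class_avg G (\<lambda>z. \<Sum>c\<in>carrier G. conj_op G \<delta> c * conj_tensor G (W c) z)"
      unfolding conj_tensor_lincomb ..
    also have "\<dots> = (\<Sum>c\<in>carrier G. conj_op G \<delta> c * inv_class_avg G (conj_tensor G (W c)))"
      by (rule inv_class_avg_lincomb)
    finally show ?thesis .
  qed
  then show ?thesis
    by (rule that)
qed

lemma diag_defect_nonneg: "\<mu> \<in> ZL1_tens G \<Longrightarrow> 0 \<le> diag_defect G \<mu>"
  unfolding diag_defect_def
  by (intro add_nonneg_nonneg sum_nonneg l1norm_nonneg projnorm_nonneg commutator_ZL1_tens conj_count_ZL1)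

lemma commutator_projnorm_le_defect:
  assumes "\<mu> \<in> ZL1_tens G" "c \<in> carrier G"
  shows "projnorm G (\<lambda>z. lact G (conj_count G c) \<mu> z - ract G \<mu> (conj_count G c) z) \<le> diag_defect G \<mu>"
  unfolding diag_defect_def using assms finite_carrier
  by (intro add_increasing2 l1norm_nonneg member_le_sum projnorm_nonneg commutator_ZL1_tens conj_count_ZL1) auto

lemma mtens_near_unit:
  assumes "\<mu> \<in> ZL1_tens G" "c \<in> carrier G"
  shows "cmod (mtens G \<mu> c - L1_unit G c) \<le> real n * diag_defect G \<mu>"
proof -
  have "l1norm G (\<lambda>t. mtens G \<mu> t - L1_unit G t) \<le> diag_defect G \<mu>"
    unfolding diag_defect_def using assms
    by (intro add_increasing order_refl sum_nonneg projnorm_nonneg commutator_ZL1_tens conj_count_ZL1)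
  then have "real n * l1norm G (\<lambda>t. mtens G \<mu> t - L1_unit G t) \<le> real n * diag_defect G \<mu>"
    by (rule mult_left_mono) simp
  then show ?thesis
    using norm_le_l1norm[OF assms(2), of "\<lambda>t. mtens G \<mu> t - L1_unit G t"] by linarith
qed

lemma conj_tensor_slice_near:
  assumes mu: "\<mu> \<in> ZL1_tens G"
  shows "cmod (conj_tensor G (\<lambda>t. \<mu> (t, \<one>)) z - \<mu> z) \<le> (real n)^2 * diag_defect G \<mu>"
proof -
  obtain x y where z: "z = (x, y)"
    by fastforce
  show ?thesis
  proof (cases "x \<in> carrier G \<and> y \<in> carrier G")
    case True
    let ?\<nu> = "\<lambda>z. lact G (conj_count G (inv y)) \<mu> z - ract G \<mu> (conj_count G (inv y)) z"
    have "cmod (conj_tensor G (\<lambda>t. \<mu> (t, \<one>)) z - \<mu> z) = cmod (?\<nu> (x, \<one>))"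
      using ZL1_tens_decomp[OF mu, of x y] True by (simp add: z)
    also have "\<dots> \<le> (real n)^2 * projnorm G ?\<nu>"
      using True by (intro ZL1_tens_norm_le_projnorm commutator_ZL1_tens conj_count_ZL1 mu) auto
    also have "\<dots> \<le> (real n)^2 * diag_defect G \<mu>"
      using True by (intro mult_left_mono commutator_projnorm_le_defect mu) auto
    finally show ?thesis .
  next
    case False
    then show ?thesis
      using diag_defect_nonneg[OF mu] by (simp add: z conj_tensor_outside ZL1_tens_outside[OF mu])
  qed
qed

lemma conj_op_slice_near_unit:
  assumes mu: "\<mu> \<in> ZL1_tens G" and c: "c \<in> carrier G"
  shows "cmod (conj_op G (\<lambda>t. \<mu> (t, \<one>)) c - L1_unit G c) \<le> ((real n)^2 + real n) * diag_defect G \<mu>"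
proof -
  let ?E = "\<lambda>z. conj_tensor G (\<lambda>t. \<mu> (t, \<one>)) z - \<mu> z"
  have "conj_op G (\<lambda>t. \<mu> (t, \<one>)) c - L1_unit G c = (mtens G \<mu> c - L1_unit G c) + mtens G ?E c"
    unfolding conj_op_def by (simp flip: mtens_add)
  then have "cmod (conj_op G (\<lambda>t. \<mu> (t, \<one>)) c - L1_unit G c) \<le> cmod (mtens G \<mu> c - L1_unit G c) + cmod (mtens G ?E c)"
    by (simp only: norm_triangle_ineq)
  also have "\<dots> \<le> real n * diag_defect G \<mu> + (real n)^2 * diag_defect G \<mu>"
    by (intro add_mono mtens_near_unit mu c mtens_norm_le conj_tensor_slice_near)
  finally show ?thesis
    by (simp add: algebra_simps)
qed

lemma inv_class_avg_conj_tensor_near_diagonal: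
  assumes w: "w \<in> ZL1 G" "conj_op G w = L1_unit G"
    and \<sigma>: "\<And>\<delta>. \<delta> \<in> ZL1 G \<Longrightarrow> inv_class_avg G (conj_tensor G \<delta>) = (\<Sum>c\<in>carrier G. conj_op G \<delta> c * \<sigma> c)"
    and mu: "\<mu> \<in> ZL1_tens G"
  shows "cmod (inv_class_avg G (conj_tensor G (\<lambda>t. \<mu> (t, \<one>) - w t)))
      \<le> ((real n)^2 + real n) * (\<Sum>c\<in>carrier G. cmod (\<sigma> c)) * diag_defect G \<mu>"
proof -
  have diff: "(\<lambda>t. \<mu> (t, \<one>) - w t) \<in> ZL1 G"
    using ZL1_tens_slice_fst[OF mu] w(1) by (rule ZL1_diff)
  have "cmod (conj_op G (\<lambda>t. \<mu> (t, \<one>) - w t) c) \<le> ((real n)^2 + real n) * diag_defect G \<mu>"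
    if "c \<in> carrier G" for c
    using conj_op_slice_near_unit[OF mu that] w(2) by (simp add: conj_op_diff)
  then have "cmod (inv_class_avg G (conj_tensor G (\<lambda>t. \<mu> (t, \<one>) - w t)))
      \<le> (\<Sum>c\<in>carrier G. (((real n)^2 + real n) * diag_defect G \<mu>) * cmod (\<sigma> c))"
    unfolding \<sigma>[OF diff]
    by (intro order_trans[OF norm_sum sum_mono]) (simp add: norm_mult mult_right_mono)
  also have "\<dots> = ((real n)^2 + real n) * (\<Sum>c\<in>carrier G. cmod (\<sigma> c)) * diag_defect G \<mu>"
    by (simp add: sum_distrib_left sum_distrib_right mult_ac)
  finally show ?thesis .
qed

text \<open>Split \<mu> = P w + P(\<mu>(-, 1) - w) - (P(\<mu>(-, 1)) - \<mu>); the middle term is controlled through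
  the factorization of T \<circ> P through Z, the last one pointwise.\<close>

lemma approx_diag_lower_bound:
  assumes w: "w \<in> ZL1 G" "conj_op G w = L1_unit G"
    and \<sigma>: "\<And>\<delta>. \<delta> \<in> ZL1 G \<Longrightarrow> inv_class_avg G (conj_tensor G \<delta>) = (\<Sum>c\<in>carrier G. conj_op G \<delta> c * \<sigma> c)"
    and mu: "\<mu> \<in> ZL1_tens G"
  shows "Re (inv_class_avg G (conj_tensor G w))
      - (((real n)^2 + real n) * (\<Sum>c\<in>carrier G. cmod (\<sigma> c)) + (real n)^2) * diag_defect G \<mu>
      \<le> projnorm G \<mu>"
proof -
  define h where "h = (\<lambda>t. \<mu> (t, \<one>))"
  have "Re (inv_class_avg G \<mu>) = Re (inv_class_avg G (conj_tensor G w))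
      + Re (inv_class_avg G (conj_tensor G (\<lambda>t. h t - w t)))
      - Re (inv_class_avg G (\<lambda>z. conj_tensor G h z - \<mu> z))"
    by (simp add: conj_tensor_diff inv_class_avg_diff)
  moreover have "- (((real n)^2 + real n) * (\<Sum>c\<in>carrier G. cmod (\<sigma> c)) * diag_defect G \<mu>)
      \<le> Re (inv_class_avg G (conj_tensor G (\<lambda>t. h t - w t)))"
    using abs_Re_le_cmod[of "inv_class_avg G (conj_tensor G (\<lambda>t. h t - w t))"]
      inv_class_avg_conj_tensor_near_diagonal[OF w \<sigma> mu] unfolding h_def by linarith
  moreover have "Re (inv_class_avg G (\<lambda>z. conj_tensor G h z - \<mu> z)) \<le> (real n)^2 * diag_defect G \<mu>"
    unfolding h_def
    by (rule order_trans[OF complex_Re_le_cmod inv_class_avg_norm_le[OF conj_tensor_slice_near[OF mu]]])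
  moreover have "Re (inv_class_avg G \<mu>) \<le> projnorm G \<mu>"
    using complex_Re_le_cmod inv_class_avg_le_projnorm[OF mu] by (rule order_trans)
  moreover have "(((real n)^2 + real n) * (\<Sum>c\<in>carrier G. cmod (\<sigma> c)) + (real n)^2) * diag_defect G \<mu>
      = ((real n)^2 + real n) * (\<Sum>c\<in>carrier G. cmod (\<sigma> c)) * diag_defect G \<mu>
        + (real n)^2 * diag_defect G \<mu>"
    by (simp add: algebra_simps)
  ultimately show ?thesis
    by linarith
qed

lemma conj_tensor_bdd_approx_diag:
  assumes w: "w \<in> ZL1 G" "conj_op G w = L1_unit G"
  shows "bdd_approx_diag G (principal {conj_tensor G w}) (projnorm G (conj_tensor G w))"
proof -
  have m: "mtens G (conj_tensor G w) = L1_unit G"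
    using w(2) by (simp add: conj_op_def)
  have "conv G (mtens G (conj_tensor G w)) a = a" "conv G a (mtens G (conj_tensor G w)) = a"
    if "a \<in> ZL1 G" for a
    unfolding m using that by (simp_all add: conv_L1_unit_left conv_L1_unit_right ZL1_outside)
  moreover have "(\<lambda>z. lact G a (conj_tensor G w) z - ract G (conj_tensor G w) a z) = (\<lambda>z. 0)"
    if "a \<in> ZL1 G" for a
    using conj_tensor_commutes[OF that] by simp
  moreover have "l1norm G (\<lambda>t. 0) = 0"
    by (simp add: l1norm_def)
  moreover have "(f \<longlongrightarrow> 0) (principal {conj_tensor G w})" if "f (conj_tensor G w) = 0" for f :: "_ \<Rightarrow> real"
    using tendsto_principal_singleton[of f "conj_tensor G w"] by (simp add: that)
  ultimately show ?thesis
    unfolding bdd_approx_diag_def using conj_tensor_ZL1_tens[OF w(1)]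
    by (auto simp: eventually_principal projnorm_zero principal_eq_bot_iff)
qed

lemma bdd_approx_diag_bound_ge:
  assumes w: "w \<in> ZL1 G" "conj_op G w = L1_unit G" and D: "bdd_approx_diag G F C"
  shows "Re (inv_class_avg G (conj_tensor G w)) \<le> C"
proof -
  obtain \<sigma> where \<sigma>: "\<And>\<delta>. \<delta> \<in> ZL1 G \<Longrightarrow>
      inv_class_avg G (conj_tensor G \<delta>) = (\<Sum>c\<in>carrier G. conj_op G \<delta> c * \<sigma> c)"
    using inv_class_avg_conj_tensor_factors by blast
  define K where "K = ((real n)^2 + real n) * (\<Sum>c\<in>carrier G. cmod (\<sigma> c)) + (real n)^2"
  have ev: "\<forall>\<^sub>F \<mu> in F. \<mu> \<in> ZL1_tens G \<and> projnorm G \<mu> \<le> C"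
    using D by (simp add: bdd_approx_diag_def)
  have "((\<lambda>\<mu>. l1norm G (\<lambda>t. conv G (mtens G \<mu>) (L1_unit G) t - L1_unit G t)) \<longlongrightarrow> 0) F"
    using D L1_unit_ZL1 by (auto simp: bdd_approx_diag_def)
  then have mult_lim: "((\<lambda>\<mu>. l1norm G (\<lambda>t. mtens G \<mu> t - L1_unit G t)) \<longlongrightarrow> 0) F"
    by (simp add: conv_L1_unit_right mtens_outside)
  have comm_lim: "((\<lambda>\<mu>. projnorm G (\<lambda>z. lact G (conj_count G c) \<mu> z - ract G \<mu> (conj_count G c) z)) \<longlongrightarrow> 0) F"
    if "c \<in> carrier G" for c
    using D conj_count_ZL1[OF that] by (auto simp: bdd_approx_diag_def)
  have "(diag_defect G \<longlongrightarrow> 0 + 0) F"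
    unfolding diag_defect_def by (intro tendsto_add tendsto_null_sum comm_lim mult_lim)
  then have "((\<lambda>\<mu>. Re (inv_class_avg G (conj_tensor G w)) - K * diag_defect G \<mu>)
      \<longlongrightarrow> Re (inv_class_avg G (conj_tensor G w)) - K * 0) F"
    by (intro tendsto_intros) simp
  moreover have "\<forall>\<^sub>F \<mu> in F. Re (inv_class_avg G (conj_tensor G w)) - K * diag_defect G \<mu> \<le> C"
    using ev
  proof eventually_elim
    case (elim \<mu>)
    then show ?case
      using approx_diag_lower_bound[OF w \<sigma>, of \<mu>] unfolding K_def by linarith
  qed
  moreover have "F \<noteq> bot"
    using D by (simp add: bdd_approx_diag_def)
  ultimately have "Re (inv_class_avg G (conj_tensor G w)) - K * 0 \<le> C"
    by (rule tendsto_upperbound)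
  then show ?thesis
    by simp
qed

theorem am_ZL1_gt1:
  assumes "\<not> comm_group G"
  shows "am_ZL1 G > 1"
proof -
  obtain w where w: "w \<in> ZL1 G" "conj_op G w = L1_unit G"
    using conj_op_surj[OF L1_unit_ZL1] by blast
  have "Re (inv_class_avg G (conj_tensor G w)) \<le> am_ZL1 G"
    unfolding am_ZL1_def using conj_tensor_bdd_approx_diag[OF w] bdd_approx_diag_bound_ge[OF w]
    by (intro cInf_greatest) auto
  then show ?thesis
    using inv_class_avg_diagonal_gt1[OF w assms] by linarith
qed

end

theorem corollary1p9:
  fixes G :: "('a, 'b) monoid_scheme"
  assumes "group G" and "finite (carrier G)" and "\<not> comm_group G"
  shows "am_ZL1 G > 1"
  using finite_group.am_ZL1_gt1[OF finite_groupI[OF assms(1,2)] assms(3)] .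

end
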